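(* Let $x_1,\ldots,x_n$ ($n\ge2$) be independent random variables with common mean $\mu_x$ and $|x_i-\mu_x|\le C_x$ for a constant $C_x$. Let $s_n=\sum_{i=1}^n x_i$ and let $\hat s_n$ be computed by recursive summation: $\hat s_1=x_1$, $\hat s_k=(\hat s_{k-1}+x_k)(1+\delta_k)$ for $2\le k\le n$, and $E_n=\hat s_n-s_n$. Assume the rounding errors $\delta_2,\ldots,\delta_n$ are random variables of mean zero such that for every $k$, \[ \mathbb{E}(\delta_k\mid \delta_2,\ldots,\delta_{k-1},x_1,\ldots,x_n)=0, \] and $a_k\le\delta_k\le b_k$, where $a_k,b_k$ are functions of $\delta_1,\ldots,\delta_{k-1}$ and $x_1,\ldots,x_n$ with $b_k-a_k\le 2u$ for a constant $u>0$ (and $\delta_1=0$). Then for any $\delta\in(0,1)$, with probability at least $1-\delta$, \[ |E_n|\le \Bigl(\sum_{j=0}^{n-2}\kappa^j\Bigr)\bigl(\lambda|\mu_x|n^{3/2}+\lambda^2C_x n\bigr)u \;=\;\frac{1-\kappa^{n-1}}{1-\kappa}\bigl(\lambda|\mu_x|n^{3/2}+\lambda^2C_x n\bigr)u\quad(\kappa\ne1), \] where $\lambda=\sqrt{2\log(2n/\delta)}$ and $\kappa=\lambda\sqrt{n}\,u$.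
   Context: The recurrence models recursive summation in floating-point arithmetic with unit roundoff $u$ (including stochastic rounding); $\delta_k$ is the relative rounding error at step $k$. *)

theory Defs
  imports "HOL-Probability.Probability"
begin

fun rec_sum :: "(nat \<Rightarrow> real) \<Rightarrow> (nat \<Rightarrow> real) \<Rightarrow> nat \<Rightarrow> real" where
  "rec_sum x d 0 = 0"
| "rec_sum x d (Suc 0) = x 1"
| "rec_sum x d (Suc (Suc k)) = (rec_sum x d (Suc k) + x (Suc (Suc k))) * (1 + d (Suc (Suc k)))"

definition info_alg ::
  "'a measure \<Rightarrow> (nat \<Rightarrow> 'a \<Rightarrow> real) \<Rightarrow> (nat \<Rightarrow> 'a \<Rightarrow> real) \<Rightarrow> nat \<Rightarrow> nat \<Rightarrow> 'a measure" where
  "info_alg M x d n k = sigma (space M)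
     ({d i -` B \<inter> space M | i B. i \<in> {2..<k} \<and> B \<in> sets borel} \<union>
      {x i -` B \<inter> space M | i B. i \<in> {1..n} \<and> B \<in> sets borel})"

end

theory Submission
  imports Defs
begin

text \<open>Expanding the error of recursive summation in powers of the rounding errors, the part of
  order j + 1 is a sum of the rounding errors delta k weighted by parts of order j, which depend
  only on the x i and on earlier rounding errors. Hoeffding's maximal inequality bounds all partial
  sums of the x i by n |mu| + lam C sqrt n; Azuma's maximal inequality, applied with the weights
  truncated at the bound of the previous order, then shows that each order gains at most the factor
  kappa = lam sqrt n u. Every one of these n events fails with probability at most delta / n.\<close>

section \<open>Hoeffding's lemma via the chord of the exponential\<close>

lemma exp_mult_le_exp_abs_mult:
  fixes l z B :: real
  assumes "\<bar>z\<bar> \<le> B"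
  shows "exp (l * z) \<le> exp (\<bar>l\<bar> * B)"
  using abs_ge_self[of "l * z"] mult_left_mono[OF assms abs_ge_zero[of l]] by (simp add: abs_mult)

definition exp_chord :: "real \<Rightarrow> real \<Rightarrow> real \<Rightarrow> real \<Rightarrow> real" where
  "exp_chord l a c y = ((a + c - y) * exp (l * a) + (y - a) * exp (l * (a + c))) / c"

lemma exp_le_exp_chord:
  assumes "c > 0" and "a \<le> y" "y \<le> a + c"
  shows "exp (l * y) \<le> exp_chord l a c y"
proof -
  define s where "s = (y - a) / c"
  have s: "0 \<le> s" "s \<le> 1" using assms by (auto simp: s_def field_simps)
  have "exp (l * y) = exp ((1 - s) * (l * a) + s * (l * (a + c)))"
    using \<open>c > 0\<close> by (simp add: s_def field_simps)
  also have "\<dots> \<le> (1 - s) * exp (l * a) + s * exp (l * (a + c))"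
    using convex_onD[OF convex_on_exp[of 1, simplified], of s] s by simp
  also have "\<dots> = exp_chord l a c y"
    using \<open>c > 0\<close> by (simp add: exp_chord_def s_def field_simps)
  finally show ?thesis .
qed

lemma exp_chord_affine:
  "exp_chord l a c y = exp_chord l a c 0 + (exp (l * (a + c)) - exp (l * a)) / c * y"
  by (simp add: exp_chord_def add_divide_distrib diff_divide_distrib algebra_simps)

lemma abs_exp_chord_le:
  assumes "c > 0" "- c \<le> a" "a \<le> 0" "a \<le> y" "y \<le> a + c" "\<bar>l\<bar> \<le> G"
  shows "\<bar>exp_chord l a c y\<bar> \<le> exp (G * c)"
proof -
  have "exp (l * z) \<le> exp (G * c)" if "\<bar>z\<bar> \<le> c" for z
  proof -
    have "\<bar>l\<bar> * c \<le> G * c"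
      using assms(1,6) by (simp add: mult_right_mono)
    then show ?thesis
      using exp_mult_le_exp_abs_mult[OF that, of l] by (meson exp_le_cancel_iff order_trans)
  qed
  then have "exp (l * a) \<le> exp (G * c)" "exp (l * (a + c)) \<le> exp (G * c)"
    using assms(2,3) by auto
  then have "(a + c - y) * exp (l * a) + (y - a) * exp (l * (a + c))
      \<le> (a + c - y) * exp (G * c) + (y - a) * exp (G * c)"
    using assms(4,5) by (intro add_mono mult_left_mono) auto
  moreover have "0 \<le> (a + c - y) * exp (l * a) + (y - a) * exp (l * (a + c))"
    using assms(4,5) by simp
  ultimately show ?thesis
    using \<open>c > 0\<close> by (simp add: exp_chord_def abs_divide field_simps)
qed

lemma exp_chord_zero_le_nonneg:
  assumes "c > 0" "-c \<le> a" "a \<le> 0" "l \<ge> 0"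
  shows "exp_chord l a c 0 \<le> exp (l\<^sup>2 * c\<^sup>2 / 8)"
proof -
  define p where "p = -a / c"
  define h where "h = l * c"
  have p: "0 \<le> p" "p \<le> 1" using assms by (auto simp: p_def field_simps)
  have "h \<ge> 0" using assms by (simp add: h_def)
  have pos: "1 + p * (exp h - 1) > 0"
    using p \<open>h \<ge> 0\<close> by (simp add: add_pos_nonneg)
  have "exp_chord l a c 0 = exp (- h * p) * (1 + p * (exp h - 1))"
    using \<open>c > 0\<close> by (simp add: exp_chord_def p_def h_def field_simps flip: exp_add)
  also have "\<dots> = exp (- h * p + ln (1 + p * (exp h - 1)))"
    unfolding exp_add using pos by simp
  also have "\<dots> \<le> exp (h\<^sup>2 / 8)"
    using Hoeffdings_lemma_aux[OF \<open>h \<ge> 0\<close> p(1)] by simp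
  finally show ?thesis by (simp add: h_def power_mult_distrib)
qed

text \<open>Hoeffding's lemma in deterministic form: the chord of exp (l * _) over an interval of
  width c containing 0, evaluated at 0.\<close>
lemma exp_chord_zero_le:
  assumes "c > 0" "-c \<le> a" "a \<le> 0"
  shows "exp_chord l a c 0 \<le> exp (l\<^sup>2 * c\<^sup>2 / 8)"
proof (cases "l \<ge> 0")
  case True
  then show ?thesis using exp_chord_zero_le_nonneg assms by blast
next
  case False
  have "exp_chord (- l) (- (a + c)) c 0 \<le> exp ((- l)\<^sup>2 * c\<^sup>2 / 8)"
    by (rule exp_chord_zero_le_nonneg) (use assms False in auto)
  moreover have "exp_chord (- l) (- (a + c)) c 0 = exp_chord l a c 0"
    by (simp add: exp_chord_def algebra_simps)
  ultimately show ?thesis by simp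
qed

lemma weighted_exp_chord_bounds:
  assumes "c > 0" "- c \<le> A" "A \<le> 0" "A \<le> D" "D \<le> A + c" "0 \<le> Y" "Y \<le> K" "\<bar>g\<bar> \<le> G"
  shows "\<bar>Y * exp (g * D)\<bar> \<le> Y * exp_chord g A c D"
    and "\<bar>Y * exp_chord g A c D\<bar> \<le> K * exp (G * c)"
    and "\<bar>Y * exp_chord g A c 0\<bar> \<le> K * exp (G * c)"
proof -
  show "\<bar>Y * exp (g * D)\<bar> \<le> Y * exp_chord g A c D"
    using exp_le_exp_chord[OF assms(1,4,5), of g] assms(6) by (simp add: abs_mult mult_left_mono)
  have "\<bar>exp_chord g A c y\<bar> \<le> exp (G * c)" if "A \<le> y" "y \<le> A + c" for y
    using abs_exp_chord_le[OF assms(1-3) that assms(8)] .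
  then show "\<bar>Y * exp_chord g A c D\<bar> \<le> K * exp (G * c)" "\<bar>Y * exp_chord g A c 0\<bar> \<le> K * exp (G * c)"
    using assms by (auto simp: abs_mult intro!: mult_mono)
qed

section \<open>Stopped partial sums\<close>

definition inside_until :: "real \<Rightarrow> (nat \<Rightarrow> 'a \<Rightarrow> real) \<Rightarrow> nat \<Rightarrow> 'a \<Rightarrow> bool" where
  "inside_until t X q \<omega> \<longleftrightarrow> (\<forall>k\<le>q. \<bar>\<Sum>j<k. X j \<omega>\<bar> \<le> t)"

definition stopped_incr :: "real \<Rightarrow> (nat \<Rightarrow> 'a \<Rightarrow> real) \<Rightarrow> nat \<Rightarrow> 'a \<Rightarrow> real" where
  "stopped_incr t X q \<omega> = (if inside_until t X q \<omega> then X q \<omega> else 0)"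

lemma abs_stopped_incr_le: "\<bar>stopped_incr t X q \<omega>\<bar> \<le> \<bar>X q \<omega>\<bar>"
  by (simp add: stopped_incr_def)

lemma AE_abs_stopped_incr_le:
  assumes "AE \<omega> in M. \<bar>X q \<omega>\<bar> \<le> K"
  shows "AE \<omega> in M. \<bar>stopped_incr t X q \<omega>\<bar> \<le> K"
  using assms by eventually_elim (rule order_trans[OF abs_stopped_incr_le])

lemma inside_until_cong:
  assumes "\<And>j. j < q \<Longrightarrow> X j \<omega> = Y j \<omega>'"
  shows "inside_until t X q \<omega> = inside_until t Y q \<omega>'"
  unfolding inside_until_def using assms by (intro all_cong1 imp_cong refl arg_cong2[where f = "(\<le>)"]
      arg_cong[where f = abs] sum.cong) auto

lemma stopped_incr_cong:
  assumes "\<And>j. j \<le> q \<Longrightarrow> X j \<omega> = Y j \<omega>'"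
  shows "stopped_incr t X q \<omega> = stopped_incr t Y q \<omega>'"
  using inside_until_cong[of q X \<omega> Y \<omega>' t] assms by (simp add: stopped_incr_def)

lemma pred_inside_until:
  assumes "\<And>j. j < q \<Longrightarrow> X j \<in> borel_measurable N"
  shows "Measurable.pred N (inside_until t X q)"
proof -
  have "Measurable.pred N (\<lambda>\<omega>. \<bar>\<Sum>j<k. X j \<omega>\<bar> \<le> t)" if "k \<le> q" for k
  proof -
    have [measurable]: "(\<lambda>\<omega>. \<Sum>j<k. X j \<omega>) \<in> borel_measurable N"
      using assms that by (intro borel_measurable_sum) auto
    show ?thesis by measurable
  qed
  moreover have "inside_until t X q = (\<lambda>\<omega>. \<forall>k\<in>{..q}. \<bar>\<Sum>j<k. X j \<omega>\<bar> \<le> t)"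
    by (auto simp: inside_until_def fun_eq_iff)
  ultimately show ?thesis by (auto intro!: pred_intros_finite)
qed

lemma measurable_stopped_incr:
  assumes "\<And>j. j \<le> q \<Longrightarrow> X j \<in> borel_measurable N"
  shows "stopped_incr t X q \<in> borel_measurable N"
proof -
  have "Measurable.pred N (inside_until t X q)"
    using assms by (intro pred_inside_until) auto
  then show ?thesis
    unfolding stopped_incr_def using assms by measurable
qed

text \<open>Once some partial sum leaves [-t, t], the stopped sum stays frozen at that value.\<close>
lemma sum_stopped_incr_exceeds:
  assumes "t \<ge> 0" "k \<le> m" "\<bar>\<Sum>q<k. X q \<omega>\<bar> > t"
  shows "\<bar>\<Sum>q<m. stopped_incr t X q \<omega>\<bar> > t"
proof -
  define k0 where "k0 = (LEAST k. \<bar>\<Sum>q<k. X q \<omega>\<bar> > t)"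
  have exceeds: "\<bar>\<Sum>q<k0. X q \<omega>\<bar> > t" and "k0 \<le> k"
    unfolding k0_def using assms by (auto intro: LeastI Least_le)
  have "inside_until t X q \<omega> \<longleftrightarrow> q < k0" for q
    using not_less_Least[of _ "\<lambda>k. \<bar>\<Sum>q<k. X q \<omega>\<bar> > t", folded k0_def] exceeds
    by (auto simp: inside_until_def not_less) (meson le_trans not_le)
  then have "(\<Sum>q<m. stopped_incr t X q \<omega>) = (\<Sum>q\<in>{..<m} \<inter> {..<k0}. X q \<omega>)"
    by (simp add: stopped_incr_def sum.inter_restrict lessThan_def)
  also have "{..<m} \<inter> {..<k0} = {..<k0}"
    using \<open>k0 \<le> k\<close> \<open>k \<le> m\<close> by auto
  finally show ?thesis using exceeds by simp
qed

definition running_exp :: "real \<Rightarrow> (nat \<Rightarrow> 'a \<Rightarrow> real) \<Rightarrow> real \<Rightarrow> nat \<Rightarrow> 'a \<Rightarrow> real" where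
  "running_exp t X l i \<omega> =
     (if inside_until t X i \<omega> then exp (l * (\<Sum>j<i. stopped_incr t X j \<omega>)) else 0)"

lemma running_exp_cong:
  assumes "\<And>j. j < i \<Longrightarrow> X j \<omega> = Y j \<omega>'"
  shows "running_exp t X l i \<omega> = running_exp t Y l i \<omega>'"
proof -
  have "(\<Sum>j<i. stopped_incr t X j \<omega>) = (\<Sum>j<i. stopped_incr t Y j \<omega>')"
    using assms by (intro sum.cong refl stopped_incr_cong) auto
  then show ?thesis
    using inside_until_cong[of i X \<omega> Y \<omega>' t] assms by (simp add: running_exp_def)
qed

lemma measurable_running_exp:
  assumes "\<And>j. j < i \<Longrightarrow> X j \<in> borel_measurable N"
  shows "running_exp t X l i \<in> borel_measurable N"
proof -
  have [measurable]: "Measurable.pred N (inside_until t X i)"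
    using assms by (rule pred_inside_until)
  have [measurable]: "(\<lambda>\<omega>. \<Sum>j<i. stopped_incr t X j \<omega>) \<in> borel_measurable N"
    using assms by (intro borel_measurable_sum measurable_stopped_incr) auto
  show ?thesis
    unfolding running_exp_def by measurable
qed

lemma running_exp_bounds:
  "0 \<le> running_exp t X l i \<omega>" "running_exp t X l i \<omega> \<le> exp (l * (\<Sum>j<i. stopped_incr t X j \<omega>))"
  by (simp_all add: running_exp_def)

lemma exp_stopped_sum_Suc:
  "exp (l * (\<Sum>j<i. stopped_incr t X j \<omega>)) * exp (l * stopped_incr t X i \<omega>)
     = exp (l * (\<Sum>j<i. stopped_incr t X j \<omega>)) - running_exp t X l i \<omega>
       + running_exp t X l i \<omega> * exp (l * X i \<omega>)"
  by (simp add: running_exp_def stopped_incr_def)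

section \<open>Chernoff bounds from exponential moment steps\<close>

text \<open>Each step multiplies the exponential moment of the partial sum by at most
  exp (l^2 c^2 / 8): the conclusion of Hoeffding's lemma for increments of range c, and all that
  the Chernoff argument uses.\<close>
definition subgaussian_steps :: "'a measure \<Rightarrow> real \<Rightarrow> nat \<Rightarrow> (nat \<Rightarrow> 'a \<Rightarrow> real) \<Rightarrow> bool" where
  "subgaussian_steps M c m Z \<longleftrightarrow> (\<forall>i<m. \<forall>l.
     (\<integral>\<omega>. exp (l * (\<Sum>j<i. Z j \<omega>)) * exp (l * Z i \<omega>) \<partial>M)
       \<le> exp (l\<^sup>2 * c\<^sup>2 / 8) * (\<integral>\<omega>. exp (l * (\<Sum>j<i. Z j \<omega>)) \<partial>M))"

lemma subgaussian_steps_uminus: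
  assumes "subgaussian_steps M c m Z"
  shows "subgaussian_steps M c m (\<lambda>i \<omega>. - Z i \<omega>)"
  unfolding subgaussian_steps_def
proof (intro allI impI)
  fix i l assume "i < m"
  then show "(\<integral>\<omega>. exp (l * (\<Sum>j<i. - Z j \<omega>)) * exp (l * - Z i \<omega>) \<partial>M)
      \<le> exp (l\<^sup>2 * c\<^sup>2 / 8) * (\<integral>\<omega>. exp (l * (\<Sum>j<i. - Z j \<omega>)) \<partial>M)"
    using assms[unfolded subgaussian_steps_def, rule_format, of i "- l"] by (simp add: sum_negf)
qed

lemma AE_exp_sum_le:
  fixes Z :: "nat \<Rightarrow> 'a \<Rightarrow> real"
  assumes "\<And>i. i < k \<Longrightarrow> AE \<omega> in M. \<bar>Z i \<omega>\<bar> \<le> K"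
  shows "AE \<omega> in M. exp (l * (\<Sum>j<k. Z j \<omega>)) \<le> exp (\<bar>l\<bar> * (real k * K))"
proof -
  have "AE \<omega> in M. \<forall>i\<in>{..<k}. \<bar>Z i \<omega>\<bar> \<le> K"
    using assms by (intro AE_finite_allI) auto
  then show ?thesis
  proof eventually_elim
    case (elim \<omega>)
    have "\<bar>\<Sum>j<k. Z j \<omega>\<bar> \<le> (\<Sum>j<k. K)"
      using elim by (intro order_trans[OF sum_abs] sum_mono) auto
    then show ?case by (intro exp_mult_le_exp_abs_mult) simp
  qed
qed

lemma (in finite_measure) integrable_exp_sum:
  fixes Z :: "nat \<Rightarrow> 'a \<Rightarrow> real"
  assumes "\<And>i. i < k \<Longrightarrow> Z i \<in> borel_measurable M" "\<And>i. i < k \<Longrightarrow> AE \<omega> in M. \<bar>Z i \<omega>\<bar> \<le> K"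
  shows "integrable M (\<lambda>\<omega>. exp (l * (\<Sum>j<k. Z j \<omega>)))"
proof -
  have [measurable]: "(\<lambda>\<omega>. \<Sum>j<k. Z j \<omega>) \<in> borel_measurable M"
    using assms(1) by (intro borel_measurable_sum) auto
  show ?thesis
    by (rule integrable_const_bound[where B = "exp (\<bar>l\<bar> * (real k * K))"])
      (use AE_exp_sum_le[OF assms(2)] in auto)
qed

lemma (in prob_space) integral_exp_sum_le:
  assumes "subgaussian_steps M c m Z" "k \<le> m"
  shows "(\<integral>\<omega>. exp (l * (\<Sum>j<k. Z j \<omega>)) \<partial>M) \<le> exp (real k * (l\<^sup>2 * c\<^sup>2 / 8))"
  using \<open>k \<le> m\<close>
proof (induction k)
  case 0
  then show ?case using prob_space by simp
next
  case (Suc k)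
  have "(\<integral>\<omega>. exp (l * (\<Sum>j<Suc k. Z j \<omega>)) \<partial>M)
      = (\<integral>\<omega>. exp (l * (\<Sum>j<k. Z j \<omega>)) * exp (l * Z k \<omega>) \<partial>M)"
    by (simp add: distrib_left exp_add)
  also have "\<dots> \<le> exp (l\<^sup>2 * c\<^sup>2 / 8) * (\<integral>\<omega>. exp (l * (\<Sum>j<k. Z j \<omega>)) \<partial>M)"
    using assms(1) Suc.prems by (simp add: subgaussian_steps_def)
  also have "\<dots> \<le> exp (l\<^sup>2 * c\<^sup>2 / 8) * exp (real k * (l\<^sup>2 * c\<^sup>2 / 8))"
    using Suc by (intro mult_left_mono) auto
  also have "\<dots> = exp (real (Suc k) * (l\<^sup>2 * c\<^sup>2 / 8))"
    by (simp add: algebra_simps flip: exp_add)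
  finally show ?case .
qed

lemma (in prob_space) subgaussian_steps_tail_le:
  assumes "subgaussian_steps M c m Z" "m > 0" "c > 0" "t > 0"
    and "\<And>i. i < m \<Longrightarrow> Z i \<in> borel_measurable M" "\<And>i. i < m \<Longrightarrow> AE \<omega> in M. \<bar>Z i \<omega>\<bar> \<le> K"
  shows "measure M {\<omega> \<in> space M. (\<Sum>i<m. Z i \<omega>) > t} \<le> exp (- 2 * t\<^sup>2 / (real m * c\<^sup>2))"
proof -
  define l where "l = 4 * t / (real m * c\<^sup>2)"
  have "l \<ge> 0" using assms by (simp add: l_def)
  have [measurable]: "(\<lambda>\<omega>. \<Sum>j<m. Z j \<omega>) \<in> borel_measurable M"
    using assms(5) by (intro borel_measurable_sum) auto
  have int: "integrable M (\<lambda>\<omega>. exp (l * (\<Sum>j<m. Z j \<omega>)))"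
    by (rule integrable_exp_sum[OF assms(5,6)])
  have "measure M {\<omega> \<in> space M. (\<Sum>i<m. Z i \<omega>) > t}
      = (\<integral>\<omega>. indicator {\<omega> \<in> space M. (\<Sum>i<m. Z i \<omega>) > t} \<omega> \<partial>M)"
    by simp
  also have "\<dots> \<le> (\<integral>\<omega>. exp (- l * t) * exp (l * (\<Sum>j<m. Z j \<omega>)) \<partial>M)"
  proof (rule integral_mono)
    fix \<omega>
    have "1 \<le> exp (- l * t) * exp (l * (\<Sum>j<m. Z j \<omega>))" if "(\<Sum>i<m. Z i \<omega>) > t"
      using that \<open>l \<ge> 0\<close> mult_left_mono[of t "\<Sum>i<m. Z i \<omega>" l] by (simp flip: exp_add)
    then show "indicator {\<omega> \<in> space M. (\<Sum>i<m. Z i \<omega>) > t} \<omega>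
        \<le> exp (- l * t) * exp (l * (\<Sum>j<m. Z j \<omega>))"
      by (simp add: indicator_def)
  qed (use int in \<open>auto intro!: integrable_real_indicator simp: less_top[symmetric]\<close>)
  also have "\<dots> \<le> exp (- l * t) * exp (real m * (l\<^sup>2 * c\<^sup>2 / 8))"
    using integral_exp_sum_le[OF assms(1) order_refl] by (simp add: mult_left_mono)
  also have "\<dots> = exp (- 2 * t\<^sup>2 / (real m * c\<^sup>2))"
    using assms by (simp add: l_def field_simps power2_eq_square flip: exp_add)
  finally show ?thesis .
qed

lemma (in prob_space) subgaussian_steps_abs_tail_le:
  assumes "subgaussian_steps M c m Z" "m > 0" "c > 0" "t > 0"
    and "\<And>i. i < m \<Longrightarrow> Z i \<in> borel_measurable M" "\<And>i. i < m \<Longrightarrow> AE \<omega> in M. \<bar>Z i \<omega>\<bar> \<le> K"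
  shows "measure M {\<omega> \<in> space M. \<bar>\<Sum>i<m. Z i \<omega>\<bar> > t} \<le> 2 * exp (- 2 * t\<^sup>2 / (real m * c\<^sup>2))"
proof -
  have [measurable]: "(\<lambda>\<omega>. \<Sum>j<m. Z j \<omega>) \<in> borel_measurable M"
    using assms(5) by (intro borel_measurable_sum) auto
  have "{\<omega> \<in> space M. \<bar>\<Sum>i<m. Z i \<omega>\<bar> > t}
      = {\<omega> \<in> space M. (\<Sum>i<m. Z i \<omega>) > t} \<union> {\<omega> \<in> space M. (\<Sum>i<m. - Z i \<omega>) > t}"
    by (auto simp: sum_negf)
  then have "measure M {\<omega> \<in> space M. \<bar>\<Sum>i<m. Z i \<omega>\<bar> > t}
      \<le> measure M {\<omega> \<in> space M. (\<Sum>i<m. Z i \<omega>) > t} + measure M {\<omega> \<in> space M. (\<Sum>i<m. - Z i \<omega>) > t}"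
    by (auto intro!: measure_Un_le simp: sum_negf)
  also have "\<dots> \<le> exp (- 2 * t\<^sup>2 / (real m * c\<^sup>2)) + exp (- 2 * t\<^sup>2 / (real m * c\<^sup>2))"
    using assms subgaussian_steps_uminus[OF assms(1)]
    by (intro add_mono subgaussian_steps_tail_le[where K = K]) auto
  finally show ?thesis by simp
qed

text \<open>Maximal inequality: to control all partial sums at once, apply the tail bound to the
  process stopped at the first exit from [-t, t].\<close>
lemma (in prob_space) stopped_maximal_tail_le:
  assumes "subgaussian_steps M c m (stopped_incr t X)" "m > 0" "c > 0" "t > 0"
    and X: "\<And>i. i < m \<Longrightarrow> X i \<in> borel_measurable M" "\<And>i. i < m \<Longrightarrow> AE \<omega> in M. \<bar>X i \<omega>\<bar> \<le> K"
  shows "measure M {\<omega> \<in> space M. \<exists>k\<le>m. \<bar>\<Sum>q<k. X q \<omega>\<bar> > t}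
           \<le> 2 * exp (- 2 * t\<^sup>2 / (real m * c\<^sup>2))"
proof -
  have Z: "stopped_incr t X i \<in> borel_measurable M" "AE \<omega> in M. \<bar>stopped_incr t X i \<omega>\<bar> \<le> K"
    if "i < m" for i
  proof -
    show "stopped_incr t X i \<in> borel_measurable M"
      using that X(1) by (intro measurable_stopped_incr) auto
    show "AE \<omega> in M. \<bar>stopped_incr t X i \<omega>\<bar> \<le> K"
      using X(2)[OF that] by (rule AE_abs_stopped_incr_le)
  qed
  have [measurable]: "(\<lambda>\<omega>. \<Sum>i<m. stopped_incr t X i \<omega>) \<in> borel_measurable M"
    using Z by (intro borel_measurable_sum) auto
  have "{\<omega> \<in> space M. \<exists>k\<le>m. \<bar>\<Sum>q<k. X q \<omega>\<bar> > t}
      \<subseteq> {\<omega> \<in> space M. \<bar>\<Sum>i<m. stopped_incr t X i \<omega>\<bar> > t}"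
    using sum_stopped_incr_exceeds[of t] \<open>t > 0\<close> by auto
  then have "measure M {\<omega> \<in> space M. \<exists>k\<le>m. \<bar>\<Sum>q<k. X q \<omega>\<bar> > t}
      \<le> measure M {\<omega> \<in> space M. \<bar>\<Sum>i<m. stopped_incr t X i \<omega>\<bar> > t}"
    by (intro finite_measure_mono) auto
  also have "\<dots> \<le> 2 * exp (- 2 * t\<^sup>2 / (real m * c\<^sup>2))"
    using assms Z by (intro subgaussian_steps_abs_tail_le[where K = K]) auto
  finally show ?thesis .
qed

section \<open>Conditional Hoeffding lemma\<close>

lemma (in prob_space) sigma_finite_subalgebra_if_subalgebra:
  assumes "subalgebra M F"
  shows "sigma_finite_subalgebra M F"
  using assms by (intro finite_measure_subalgebra_is_sigma_finite)
    (simp add: finite_measure_subalgebra_def finite_measure_subalgebra_axioms_def finite_measure_axioms)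

lemma (in sigma_finite_subalgebra) integral_mult_cond_exp_zero:
  assumes "h \<in> borel_measurable F" "D \<in> borel_measurable M" "integrable M (\<lambda>\<omega>. h \<omega> * D \<omega>)"
    and "AE \<omega> in M. real_cond_exp M F D \<omega> = 0"
  shows "(\<integral>\<omega>. h \<omega> * D \<omega> \<partial>M) = 0"
proof -
  have "(\<integral>\<omega>. h \<omega> * D \<omega> \<partial>M) = (\<integral>\<omega>. h \<omega> * real_cond_exp M F D \<omega> \<partial>M)"
    using real_cond_exp_intg(2)[OF assms(3,1,2)] by simp
  also have "\<dots> = (\<integral>\<omega>. 0 \<partial>M)"
  proof (rule integral_cong_AE)
    have [measurable]: "h \<in> borel_measurable M"
      using measurable_from_subalg[OF subalg assms(1)] .
    show "AE \<omega> in M. h \<omega> * real_cond_exp M F D \<omega> = 0"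
      using assms(4) by eventually_elim simp
  qed (use assms(1) measurable_from_subalg[OF subalg assms(1)] in measurable)
  finally show ?thesis by simp
qed

lemma (in sigma_finite_subalgebra) AE_ennreal_le_nn_cond_exp:
  fixes f :: "'a \<Rightarrow> real"
  assumes [measurable]: "f \<in> borel_measurable F" "g \<in> borel_measurable M"
    and "\<And>\<omega>. \<omega> \<in> space M \<Longrightarrow> ennreal (f \<omega>) \<le> g \<omega>"
  shows "AE \<omega> in M. ennreal (f \<omega>) \<le> nn_cond_exp M F g \<omega>"
proof -
  have [measurable]: "f \<in> borel_measurable M"
    using measurable_from_subalg[OF subalg assms(1)] .
  have "AE \<omega> in M. ennreal (f \<omega>) = nn_cond_exp M F (\<lambda>\<omega>. ennreal (f \<omega>)) \<omega>"
    by (intro nn_cond_exp_F_meas) measurable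
  moreover have "AE \<omega> in M. nn_cond_exp M F (\<lambda>\<omega>. ennreal (f \<omega>)) \<omega> \<le> nn_cond_exp M F g \<omega>"
    using assms(3) by (intro nn_cond_exp_mono AE_I2) auto
  ultimately show ?thesis by eventually_elim simp
qed

lemma (in sigma_finite_subalgebra) AE_nn_cond_exp_le_ennreal:
  fixes f :: "'a \<Rightarrow> real"
  assumes [measurable]: "f \<in> borel_measurable F" "g \<in> borel_measurable M"
    and "\<And>\<omega>. \<omega> \<in> space M \<Longrightarrow> g \<omega> \<le> ennreal (f \<omega>)"
  shows "AE \<omega> in M. nn_cond_exp M F g \<omega> \<le> ennreal (f \<omega>)"
proof -
  have [measurable]: "f \<in> borel_measurable M"
    using measurable_from_subalg[OF subalg assms(1)] .
  have "AE \<omega> in M. ennreal (f \<omega>) = nn_cond_exp M F (\<lambda>\<omega>. ennreal (f \<omega>)) \<omega>"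
    by (intro nn_cond_exp_F_meas) measurable
  moreover have "AE \<omega> in M. nn_cond_exp M F g \<omega> \<le> nn_cond_exp M F (\<lambda>\<omega>. ennreal (f \<omega>)) \<omega>"
    using assms(3) by (intro nn_cond_exp_mono AE_I2) auto
  ultimately show ?thesis by eventually_elim simp
qed

text \<open>Only nonnegative conditional expectations are available without integrability, so the
  argument runs through the positive and negative parts of D.\<close>
lemma (in sigma_finite_subalgebra) cond_exp_zero_bounds_sign:
  assumes [measurable]: "D \<in> borel_measurable M"
    and "a \<in> borel_measurable F" "b \<in> borel_measurable F"
    and between: "\<And>\<omega>. \<omega> \<in> space M \<Longrightarrow> a \<omega> \<le> D \<omega> \<and> D \<omega> \<le> b \<omega>"
    and "AE \<omega> in M. real_cond_exp M F D \<omega> = 0"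
  shows "AE \<omega> in M. a \<omega> \<le> 0 \<and> 0 \<le> b \<omega>"
proof -
  define P where "P = nn_cond_exp M F (\<lambda>\<omega>. ennreal (D \<omega>))"
  define N where "N = nn_cond_exp M F (\<lambda>\<omega>. ennreal (- D \<omega>))"
  have "AE \<omega> in M. ennreal (a \<omega>) \<le> P \<omega>" "AE \<omega> in M. P \<omega> \<le> ennreal (b \<omega>)"
    "AE \<omega> in M. N \<omega> \<le> ennreal (- a \<omega>)" "AE \<omega> in M. ennreal (- b \<omega>) \<le> N \<omega>"
    unfolding P_def N_def using assms(2,3) between
    by (auto intro!: AE_ennreal_le_nn_cond_exp AE_nn_cond_exp_le_ennreal ennreal_leI)
  moreover have "AE \<omega> in M. enn2real (P \<omega>) - enn2real (N \<omega>) = 0"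
    using assms(5) unfolding real_cond_exp_def P_def N_def .
  ultimately show ?thesis
  proof eventually_elim
    case (elim \<omega>)
    have "P \<omega> < \<infinity>" "N \<omega> < \<infinity>"
      using elim(2,3) by (auto simp: le_less_trans)
    then show ?case
      using elim enn2real_mono[of "ennreal (a \<omega>)" "P \<omega>"] enn2real_mono[of "ennreal (- b \<omega>)" "N \<omega>"]
      by (cases "a \<omega> \<le> 0"; cases "0 \<le> b \<omega>") (auto simp: ennreal_neg)
  qed
qed

text \<open>A conditional mean of zero forces a \<le> 0 \<le> b, so the bounds can be clamped to an interval
  [A, A + c] with -c \<le> A \<le> 0.\<close>
lemma (in sigma_finite_subalgebra) cond_exp_zero_shifted_interval:
  assumes "D \<in> borel_measurable M" "a \<in> borel_measurable F" "b \<in> borel_measurable F"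
    and between: "\<And>\<omega>. \<omega> \<in> space M \<Longrightarrow> a \<omega> \<le> D \<omega> \<and> D \<omega> \<le> b \<omega>"
    and width: "\<And>\<omega>. \<omega> \<in> space M \<Longrightarrow> b \<omega> - a \<omega> \<le> c"
    and "AE \<omega> in M. real_cond_exp M F D \<omega> = 0"
  shows "AE \<omega> in M. max (- c) (min 0 (a \<omega>)) \<le> D \<omega> \<and> D \<omega> \<le> max (- c) (min 0 (a \<omega>)) + c"
proof -
  have "AE \<omega> in M. a \<omega> \<le> 0 \<and> 0 \<le> b \<omega>"
    by (rule cond_exp_zero_bounds_sign) (use assms in auto)
  then show ?thesis
  proof (rule AE_mp, intro AE_I2 impI)
    fix \<omega> assume "\<omega> \<in> space M" "a \<omega> \<le> 0 \<and> 0 \<le> b \<omega>"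
    then show "max (- c) (min 0 (a \<omega>)) \<le> D \<omega> \<and> D \<omega> \<le> max (- c) (min 0 (a \<omega>)) + c"
      using between[of \<omega>] width[of \<omega>] by auto
  qed
qed

lemma (in prob_space) integral_exp_le_integral_exp_chord:
  assumes "subalgebra M F"
    and D [measurable]: "D \<in> borel_measurable M" and ce: "AE \<omega> in M. real_cond_exp M F D \<omega> = 0"
    and A: "A \<in> borel_measurable F" "\<And>\<omega>. - c \<le> A \<omega> \<and> A \<omega> \<le> 0"
      "AE \<omega> in M. A \<omega> \<le> D \<omega> \<and> D \<omega> \<le> A \<omega> + c" and "c > 0"
    and Y: "Y \<in> borel_measurable F" "\<And>\<omega>. \<omega> \<in> space M \<Longrightarrow> 0 \<le> Y \<omega>" "AE \<omega> in M. Y \<omega> \<le> K"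
    and g: "g \<in> borel_measurable F" "\<And>\<omega>. \<omega> \<in> space M \<Longrightarrow> \<bar>g \<omega>\<bar> \<le> G"
  shows "integrable M (\<lambda>\<omega>. Y \<omega> * exp_chord (g \<omega>) (A \<omega>) c 0)"
    and "(\<integral>\<omega>. Y \<omega> * exp (g \<omega> * D \<omega>) \<partial>M) \<le> (\<integral>\<omega>. Y \<omega> * exp_chord (g \<omega>) (A \<omega>) c 0 \<partial>M)"
proof -
  interpret sigma_finite_subalgebra M F
    using assms(1) by (rule sigma_finite_subalgebra_if_subalgebra)
  have [measurable]: "Y \<in> borel_measurable M" "g \<in> borel_measurable M"
    using Y(1) g(1) by (auto intro: measurable_from_subalg[OF subalg])
  define chord where "chord y \<omega> = Y \<omega> * exp_chord (g \<omega>) (A \<omega>) c y" for y \<omega>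
  define slope where "slope \<omega> = Y \<omega> * ((exp (g \<omega> * (A \<omega> + c)) - exp (g \<omega> * A \<omega>)) / c)" for \<omega>
  have F_meas: "chord 0 \<in> borel_measurable F" "slope \<in> borel_measurable F"
    using A(1) Y(1) g(1) unfolding chord_def slope_def exp_chord_def by measurable
  have [measurable]: "chord 0 \<in> borel_measurable M" "slope \<in> borel_measurable M"
    using F_meas by (auto intro: measurable_from_subalg[OF subalg])
  have chord_0: "chord 0 = (\<lambda>\<omega>. Y \<omega> * exp_chord (g \<omega>) (A \<omega>) c 0)"
    by (simp add: chord_def fun_eq_iff)
  have affine: "chord y \<omega> = chord 0 \<omega> + slope \<omega> * y" for y \<omega>
    unfolding chord_def slope_def by (subst exp_chord_affine) (simp add: algebra_simps)
  have chord: "AE \<omega> in M. \<bar>Y \<omega> * exp (g \<omega> * D \<omega>)\<bar> \<le> chord (D \<omega>) \<omega>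
      \<and> \<bar>chord (D \<omega>) \<omega>\<bar> \<le> K * exp (G * c) \<and> \<bar>chord 0 \<omega>\<bar> \<le> K * exp (G * c)"
    using eventually_conj[OF A(3) Y(3)]
  proof (rule AE_mp, intro AE_I2 impI)
    fix \<omega> assume \<omega>: "\<omega> \<in> space M" and DK: "(A \<omega> \<le> D \<omega> \<and> D \<omega> \<le> A \<omega> + c) \<and> Y \<omega> \<le> K"
    then show "\<bar>Y \<omega> * exp (g \<omega> * D \<omega>)\<bar> \<le> chord (D \<omega>) \<omega>
      \<and> \<bar>chord (D \<omega>) \<omega>\<bar> \<le> K * exp (G * c) \<and> \<bar>chord 0 \<omega>\<bar> \<le> K * exp (G * c)"
      using weighted_exp_chord_bounds[where A = "A \<omega>" and D = "D \<omega>" and Y = "Y \<omega>" and g = "g \<omega>",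
          OF \<open>c > 0\<close>] A(2)[of \<omega>] Y(2)[OF \<omega>] g(2)[OF \<omega>]
      unfolding chord_def by auto
  qed
  have int_chord: "integrable M (chord 0)"
    using chord by (intro integrable_const_bound[where B = "K * exp (G * c)"]) (auto elim: AE_mp)
  then show "integrable M (\<lambda>\<omega>. Y \<omega> * exp_chord (g \<omega>) (A \<omega>) c 0)"
    by (simp only: chord_0)
  have int_slope: "integrable M (\<lambda>\<omega>. slope \<omega> * D \<omega>)"
  proof (rule integrable_const_bound[where B = "2 * (K * exp (G * c))"])
    show "AE \<omega> in M. norm (slope \<omega> * D \<omega>) \<le> 2 * (K * exp (G * c))"
      using chord by eventually_elim (simp add: affine[of "D _"] abs_le_iff; linarith)
  qed measurable
  have "(\<integral>\<omega>. Y \<omega> * exp (g \<omega> * D \<omega>) \<partial>M) \<le> (\<integral>\<omega>. chord 0 \<omega> + slope \<omega> * D \<omega> \<partial>M)"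
  proof (rule integral_mono_AE)
    show "integrable M (\<lambda>\<omega>. Y \<omega> * exp (g \<omega> * D \<omega>))"
      using chord by (intro integrable_const_bound[where B = "K * exp (G * c)"]) (auto elim!: AE_mp)
  qed (use chord int_chord int_slope in \<open>auto elim: AE_mp simp: affine[of "D _"]\<close>)
  also have "\<dots> = (\<integral>\<omega>. chord 0 \<omega> \<partial>M)"
    using integral_mult_cond_exp_zero[OF F_meas(2) D int_slope ce] int_chord int_slope by simp
  finally show "(\<integral>\<omega>. Y \<omega> * exp (g \<omega> * D \<omega>) \<partial>M) \<le> (\<integral>\<omega>. Y \<omega> * exp_chord (g \<omega>) (A \<omega>) c 0 \<partial>M)"
    by (simp only: chord_0)
qed

lemma (in prob_space) cond_hoeffding_mgf:
  assumes "subalgebra M F"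
    and D: "D \<in> borel_measurable M" "AE \<omega> in M. real_cond_exp M F D \<omega> = 0"
    and ab: "a \<in> borel_measurable F" "b \<in> borel_measurable F"
      "\<And>\<omega>. \<omega> \<in> space M \<Longrightarrow> a \<omega> \<le> D \<omega> \<and> D \<omega> \<le> b \<omega>"
      "\<And>\<omega>. \<omega> \<in> space M \<Longrightarrow> b \<omega> - a \<omega> \<le> c" and "c > 0"
    and Y: "Y \<in> borel_measurable F" "\<And>\<omega>. \<omega> \<in> space M \<Longrightarrow> 0 \<le> Y \<omega>" "AE \<omega> in M. Y \<omega> \<le> K"
    and g: "g \<in> borel_measurable F" "\<And>\<omega>. \<omega> \<in> space M \<Longrightarrow> \<bar>g \<omega>\<bar> \<le> G"
  shows "(\<integral>\<omega>. Y \<omega> * exp (g \<omega> * D \<omega>) \<partial>M) \<le> exp (G\<^sup>2 * c\<^sup>2 / 8) * (\<integral>\<omega>. Y \<omega> \<partial>M)"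
proof -
  interpret sigma_finite_subalgebra M F
    using assms(1) by (rule sigma_finite_subalgebra_if_subalgebra)
  define A where "A \<omega> = max (- c) (min 0 (a \<omega>))" for \<omega>
  have [measurable]: "a \<in> borel_measurable F"
    by (rule ab(1))
  have A: "A \<in> borel_measurable F" "- c \<le> A \<omega> \<and> A \<omega> \<le> 0" for \<omega>
    unfolding A_def using \<open>c > 0\<close> by (measurable, auto)
  have [measurable]: "Y \<in> borel_measurable M"
    using measurable_from_subalg[OF subalg Y(1)] .
  have "AE \<omega> in M. A \<omega> \<le> D \<omega> \<and> D \<omega> \<le> A \<omega> + c"
    unfolding A_def by (rule cond_exp_zero_shifted_interval[OF D(1) ab D(2)])
  note chord = integral_exp_le_integral_exp_chord[OF assms(1) D A(1) A(2) this \<open>c > 0\<close> Y g]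
  have "(\<integral>\<omega>. Y \<omega> * exp (g \<omega> * D \<omega>) \<partial>M) \<le> (\<integral>\<omega>. Y \<omega> * exp_chord (g \<omega>) (A \<omega>) c 0 \<partial>M)"
    by (rule chord(2))
  also have "\<dots> \<le> (\<integral>\<omega>. Y \<omega> * exp (G\<^sup>2 * c\<^sup>2 / 8) \<partial>M)"
  proof (rule integral_mono)
    show "integrable M (\<lambda>\<omega>. Y \<omega> * exp (G\<^sup>2 * c\<^sup>2 / 8))"
      using Y(3) by (intro integrable_mult_left integrable_const_bound[where B = K])
        (auto elim!: AE_mp intro!: AE_I2 simp: Y(2))
    fix \<omega> assume "\<omega> \<in> space M"
    have "exp_chord (g \<omega>) (A \<omega>) c 0 \<le> exp ((g \<omega>)\<^sup>2 * c\<^sup>2 / 8)"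
      using \<open>c > 0\<close> A(2) by (intro exp_chord_zero_le) auto
    also have "\<dots> \<le> exp (G\<^sup>2 * c\<^sup>2 / 8)"
      using power_mono[OF g(2)[OF \<open>\<omega> \<in> space M\<close>] abs_ge_zero, of 2]
      by (simp add: mult_right_mono)
    finally show "Y \<omega> * exp_chord (g \<omega>) (A \<omega>) c 0 \<le> Y \<omega> * exp (G\<^sup>2 * c\<^sup>2 / 8)"
      using Y(2)[OF \<open>\<omega> \<in> space M\<close>] by (rule mult_left_mono)
  qed (rule chord(1))
  finally show ?thesis
    by (simp add: mult.commute)
qed

section \<open>Maximal inequalities of Hoeffding and Azuma\<close>

lemma measurable_apply_PiM [measurable]:
  "(\<lambda>y :: nat \<Rightarrow> real. y j) \<in> borel_measurable (PiM I (\<lambda>_. borel))"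
proof (cases "j \<in> I")
  case False
  have "(\<lambda>y :: nat \<Rightarrow> real. undefined :: real) \<in> borel_measurable (PiM I (\<lambda>_. borel))"
    by simp
  then show ?thesis
    by (rule measurable_cong[THEN iffD1, rotated]) (use False in \<open>auto simp: space_PiM PiE_def extensional_def\<close>)
qed (rule measurable_component_singleton)

lemma (in prob_space) hoeffding_mgf_le:
  fixes X :: "'a \<Rightarrow> real"
  assumes [measurable]: "X \<in> borel_measurable M" and "expectation X = \<mu>" and "C > 0"
    and bounded: "\<And>\<omega>. \<omega> \<in> space M \<Longrightarrow> \<bar>X \<omega> - \<mu>\<bar> \<le> C"
  shows "(\<integral>\<omega>. exp (l * (X \<omega> - \<mu>)) \<partial>M) \<le> exp (l\<^sup>2 * (2 * C)\<^sup>2 / 8)"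
proof -
  define slope where "slope = (exp (l * (- C + 2 * C)) - exp (l * - C)) / (2 * C)"
  have "\<bar>X \<omega>\<bar> \<le> \<bar>\<mu>\<bar> + C" if "\<omega> \<in> space M" for \<omega>
    using bounded[OF that] by arith
  then have int_X: "integrable M X"
    by (intro integrable_const_bound[where B = "\<bar>\<mu>\<bar> + C"]) (auto intro!: AE_I2)
  have "(\<integral>\<omega>. exp (l * (X \<omega> - \<mu>)) \<partial>M) \<le> (\<integral>\<omega>. exp_chord l (- C) (2 * C) 0 + slope * (X \<omega> - \<mu>) \<partial>M)"
  proof (rule integral_mono)
    have "norm (exp (l * (X \<omega> - \<mu>))) \<le> exp (\<bar>l\<bar> * C)" if "\<omega> \<in> space M" for \<omega>
      using exp_mult_le_exp_abs_mult[OF bounded[OF that], of l] by simp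
    then show "integrable M (\<lambda>\<omega>. exp (l * (X \<omega> - \<mu>)))"
      by (intro integrable_const_bound[where B = "exp (\<bar>l\<bar> * C)"]) (auto intro!: AE_I2)
    fix \<omega> assume "\<omega> \<in> space M"
    then show "exp (l * (X \<omega> - \<mu>)) \<le> exp_chord l (- C) (2 * C) 0 + slope * (X \<omega> - \<mu>)"
      using exp_le_exp_chord[of "2 * C" "- C" "X \<omega> - \<mu>" l] bounded[of \<omega>] \<open>C > 0\<close>
      by (simp add: exp_chord_affine[of l "- C" "2 * C" "X \<omega> - \<mu>"] slope_def abs_le_iff)
  qed (use int_X in auto)
  also have "\<dots> = exp_chord l (- C) (2 * C) 0"
    using int_X \<open>expectation X = \<mu>\<close> by (simp add: prob_space)
  also have "\<dots> \<le> exp (l\<^sup>2 * (2 * C)\<^sup>2 / 8)"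
    using \<open>C > 0\<close> by (intro exp_chord_zero_le) auto
  finally show ?thesis .
qed

lemma (in prob_space) indep_vars_integral_prefix_mult:
  fixes x :: "nat \<Rightarrow> 'a \<Rightarrow> real" and g :: "(nat \<Rightarrow> real) \<Rightarrow> real" and h :: "real \<Rightarrow> real"
  assumes "indep_vars (\<lambda>_. borel) x {1..n}" "i < n"
    and g: "g \<in> borel_measurable (PiM {1..i} (\<lambda>_. borel))" "integrable M (\<lambda>\<omega>. g (restrict (\<lambda>j. x j \<omega>) {1..i}))"
    and h: "h \<in> borel_measurable borel" "integrable M (\<lambda>\<omega>. h (x (Suc i) \<omega>))"
  shows "integrable M (\<lambda>\<omega>. g (restrict (\<lambda>j. x j \<omega>) {1..i}) * h (x (Suc i) \<omega>))"
    and "(\<integral>\<omega>. g (restrict (\<lambda>j. x j \<omega>) {1..i}) * h (x (Suc i) \<omega>) \<partial>M)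
      = (\<integral>\<omega>. g (restrict (\<lambda>j. x j \<omega>) {1..i}) \<partial>M) * (\<integral>\<omega>. h (x (Suc i) \<omega>) \<partial>M)"
proof -
  have "indep_var (PiM {1..i} (\<lambda>_. borel)) (\<lambda>\<omega>. restrict (\<lambda>j. x j \<omega>) {1..i})
      (PiM {Suc i} (\<lambda>_. borel)) (\<lambda>\<omega>. restrict (\<lambda>j. x j \<omega>) {Suc i})"
    using assms(1,2) by (intro indep_var_restrict) auto
  from indep_var_compose[OF this g(1), of "\<lambda>y. h (y (Suc i))"] h(1)
  have "indep_var borel (\<lambda>\<omega>. g (restrict (\<lambda>j. x j \<omega>) {1..i})) borel (\<lambda>\<omega>. h (x (Suc i) \<omega>))"
    by (simp add: comp_def)
  then show "integrable M (\<lambda>\<omega>. g (restrict (\<lambda>j. x j \<omega>) {1..i}) * h (x (Suc i) \<omega>))"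
    and "(\<integral>\<omega>. g (restrict (\<lambda>j. x j \<omega>) {1..i}) * h (x (Suc i) \<omega>) \<partial>M)
      = (\<integral>\<omega>. g (restrict (\<lambda>j. x j \<omega>) {1..i}) \<partial>M) * (\<integral>\<omega>. h (x (Suc i) \<omega>) \<partial>M)"
    using g(2) h(2) by (auto intro: indep_var_integrable indep_var_lebesgue_integral)
qed

text \<open>On the event where the process is still running (G = E) the next increment contributes an
  independent factor H; elsewhere the stopped increment is 0.\<close>
lemma (in prob_space) integral_stopped_factor_le:
  fixes E G H :: "'a \<Rightarrow> real"
  assumes "integrable M E" "integrable M G" "integrable M (\<lambda>\<omega>. G \<omega> * H \<omega>)"
    and "\<And>\<omega>. 0 \<le> G \<omega>" "\<And>\<omega>. G \<omega> \<le> E \<omega>"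
    and "(\<integral>\<omega>. G \<omega> * H \<omega> \<partial>M) = (\<integral>\<omega>. G \<omega> \<partial>M) * (\<integral>\<omega>. H \<omega> \<partial>M)"
    and "(\<integral>\<omega>. H \<omega> \<partial>M) \<le> \<Phi>" "1 \<le> \<Phi>"
  shows "(\<integral>\<omega>. E \<omega> - G \<omega> + G \<omega> * H \<omega> \<partial>M) \<le> \<Phi> * (\<integral>\<omega>. E \<omega> \<partial>M)"
proof -
  have "0 \<le> (\<integral>\<omega>. G \<omega> \<partial>M)" "0 \<le> (\<integral>\<omega>. E \<omega> - G \<omega> \<partial>M)"
    using assms(4,5) by (auto intro!: integral_nonneg_AE)
  then have "(\<integral>\<omega>. G \<omega> \<partial>M) * (\<integral>\<omega>. H \<omega> \<partial>M) \<le> (\<integral>\<omega>. G \<omega> \<partial>M) * \<Phi>"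
    "1 * (\<integral>\<omega>. E \<omega> - G \<omega> \<partial>M) \<le> \<Phi> * (\<integral>\<omega>. E \<omega> - G \<omega> \<partial>M)"
    using mult_left_mono[OF assms(7)] mult_right_mono[OF assms(8)] by auto
  then have "(\<integral>\<omega>. E \<omega> - G \<omega> \<partial>M) + (\<integral>\<omega>. G \<omega> \<partial>M) * (\<integral>\<omega>. H \<omega> \<partial>M)
      \<le> \<Phi> * ((\<integral>\<omega>. E \<omega> - G \<omega> \<partial>M) + (\<integral>\<omega>. G \<omega> \<partial>M))"
    unfolding distrib_left by (simp add: mult.commute)
  also have "\<dots> = \<Phi> * (\<integral>\<omega>. E \<omega> \<partial>M)"
    using assms(1,2) by simp
  finally show ?thesis
    using assms(1,2,3,6) by simp
qed

lemma (in prob_space) indep_stopped_subgaussian_steps: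
  fixes x :: "nat \<Rightarrow> 'a \<Rightarrow> real"
  assumes indep: "indep_vars (\<lambda>_. borel) x {1..n}"
    and mean: "\<And>i. i \<in> {1..n} \<Longrightarrow> expectation (x i) = \<mu>"
    and bounded: "\<And>i \<omega>. i \<in> {1..n} \<Longrightarrow> \<omega> \<in> space M \<Longrightarrow> \<bar>x i \<omega> - \<mu>\<bar> \<le> C" and "C > 0"
  shows "subgaussian_steps M (2 * C) n (stopped_incr t (\<lambda>q \<omega>. x (Suc q) \<omega> - \<mu>))"
  unfolding subgaussian_steps_def
proof (intro allI impI)
  fix i l assume "i < n"
  define X where "X = (\<lambda>q \<omega>. x (Suc q) \<omega> - \<mu>)"
  define Xy where "Xy = (\<lambda>q (y :: nat \<Rightarrow> real). y (Suc q) - \<mu>)"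
  define E where "E = (\<lambda>\<omega>. exp (l * (\<Sum>j<i. stopped_incr t X j \<omega>)))"
  define G where "G = running_exp t X l i"
  define H where "H = (\<lambda>\<omega>. exp (l * (x (Suc i) \<omega> - \<mu>)))"
  have x_Suc: "x (Suc j) \<in> borel_measurable M" if "j < n" for j
    using indep that by (auto simp: indep_vars_def)
  have X: "X j \<in> borel_measurable M" if "j < n" for j
  proof -
    from x_Suc[OF that] have "(\<lambda>\<omega>. x (Suc j) \<omega> - \<mu>) \<in> borel_measurable M"
      by measurable
    then show ?thesis
      by (simp add: X_def)
  qed
  have Z_meas: "stopped_incr t X j \<in> borel_measurable M" if "j < n" for j
    using that X by (intro measurable_stopped_incr) auto
  have Z_bound: "AE \<omega> in M. \<bar>stopped_incr t X j \<omega>\<bar> \<le> C" if "j < n" for j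
  proof (rule AE_I2)
    fix \<omega> assume "\<omega> \<in> space M"
    then show "\<bar>stopped_incr t X j \<omega>\<bar> \<le> C"
      using abs_stopped_incr_le[of t X j \<omega>] bounded[of "Suc j" \<omega>] that by (simp add: X_def)
  qed
  have G_restrict: "G = (\<lambda>\<omega>. running_exp t Xy l i (restrict (\<lambda>j. x j \<omega>) {1..i}))"
    unfolding G_def by (rule ext, rule running_exp_cong) (simp add: X_def Xy_def)
  have Xy_meas: "running_exp t Xy l i \<in> borel_measurable (PiM {1..i} (\<lambda>_. borel))"
    unfolding Xy_def by (intro measurable_running_exp) measurable
  have int_E: "integrable M E"
    unfolding E_def by (rule integrable_exp_sum[where K = C]) (use \<open>i < n\<close> Z_meas Z_bound in auto)
  have "G \<in> borel_measurable M"
    unfolding G_def using \<open>i < n\<close> X by (intro measurable_running_exp) auto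
  then have int_G: "integrable M G"
    by (rule Bochner_Integration.integrable_bound[OF int_E])
      (intro AE_I2, use running_exp_bounds[of t X l i] in \<open>auto simp: G_def E_def\<close>)
  have int_H: "integrable M H"
    unfolding H_def using bounded[of "Suc i"] \<open>i < n\<close> X[of i]
    by (intro integrable_const_bound[where B = "exp (\<bar>l\<bar> * C)"])
      (auto intro!: AE_I2 exp_mult_le_exp_abs_mult simp: X_def simp del: exp_le_cancel_iff)
  have GH: "integrable M (\<lambda>\<omega>. G \<omega> * H \<omega>)" "(\<integral>\<omega>. G \<omega> * H \<omega> \<partial>M) = (\<integral>\<omega>. G \<omega> \<partial>M) * (\<integral>\<omega>. H \<omega> \<partial>M)"
    using indep_vars_integral_prefix_mult[where h = "\<lambda>z. exp (l * (z - \<mu>))",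
        OF indep \<open>i < n\<close> Xy_meas int_G[unfolded G_restrict] _ int_H[unfolded H_def]]
    unfolding G_restrict H_def by measurable
  have "(\<integral>\<omega>. H \<omega> \<partial>M) \<le> exp (l\<^sup>2 * (2 * C)\<^sup>2 / 8)"
    unfolding H_def using \<open>i < n\<close> \<open>C > 0\<close>
    by (intro hoeffding_mgf_le) (auto intro!: mean bounded x_Suc)
  have "(\<integral>\<omega>. E \<omega> * exp (l * stopped_incr t X i \<omega>) \<partial>M) = (\<integral>\<omega>. E \<omega> - G \<omega> + G \<omega> * H \<omega> \<partial>M)"
    by (simp add: E_def G_def H_def X_def exp_stopped_sum_Suc)
  also have "\<dots> \<le> exp (l\<^sup>2 * (2 * C)\<^sup>2 / 8) * (\<integral>\<omega>. E \<omega> \<partial>M)"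
    using int_E int_G GH \<open>(\<integral>\<omega>. H \<omega> \<partial>M) \<le> exp (l\<^sup>2 * (2 * C)\<^sup>2 / 8)\<close> running_exp_bounds[of t X l i]
    by (intro integral_stopped_factor_le) (auto simp: E_def G_def)
  finally show "(\<integral>\<omega>. exp (l * (\<Sum>j<i. stopped_incr t (\<lambda>q \<omega>. x (Suc q) \<omega> - \<mu>) j \<omega>))
        * exp (l * stopped_incr t (\<lambda>q \<omega>. x (Suc q) \<omega> - \<mu>) i \<omega>) \<partial>M)
      \<le> exp (l\<^sup>2 * (2 * C)\<^sup>2 / 8) * (\<integral>\<omega>. exp (l * (\<Sum>j<i. stopped_incr t (\<lambda>q \<omega>. x (Suc q) \<omega> - \<mu>) j \<omega>)) \<partial>M)"
    unfolding E_def X_def .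
qed

lemma (in prob_space) hoeffding_maximal_indep:
  fixes x :: "nat \<Rightarrow> 'a \<Rightarrow> real"
  assumes "n > 0" "C > 0" "t > 0"
    and indep: "indep_vars (\<lambda>_. borel) x {1..n}"
    and mean: "\<And>i. i \<in> {1..n} \<Longrightarrow> expectation (x i) = \<mu>"
    and bounded: "\<And>i \<omega>. i \<in> {1..n} \<Longrightarrow> \<omega> \<in> space M \<Longrightarrow> \<bar>x i \<omega> - \<mu>\<bar> \<le> C"
  shows "measure M {\<omega> \<in> space M. \<exists>k\<le>n. \<bar>\<Sum>q<k. x (Suc q) \<omega> - \<mu>\<bar> > t}
           \<le> 2 * exp (- 2 * t\<^sup>2 / (real n * (2 * C)\<^sup>2))"
proof (rule stopped_maximal_tail_le[where K = C])
  show "subgaussian_steps M (2 * C) n (stopped_incr t (\<lambda>q \<omega>. x (Suc q) \<omega> - \<mu>))"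
    using indep mean bounded \<open>C > 0\<close> by (rule indep_stopped_subgaussian_steps)
  show "(\<lambda>\<omega>. x (Suc i) \<omega> - \<mu>) \<in> borel_measurable M" if "i < n" for i
  proof -
    have "x (Suc i) \<in> borel_measurable M"
      using indep that by (auto simp: indep_vars_def)
    then show ?thesis by measurable
  qed
qed (use assms in \<open>auto intro!: AE_I2\<close>)

text \<open>The F q need not increase: each only has to make the past
  differences D j, j < q, and the weights V j, j \<le> q, measurable.\<close>
locale weighted_martingale_differences = prob_space +
  fixes F :: "nat \<Rightarrow> 'a measure" and V D a b :: "nat \<Rightarrow> 'a \<Rightarrow> real" and m :: nat and c w :: real
  assumes subalgebra_F: "\<And>q. q < m \<Longrightarrow> subalgebra M (F q)"
    and D_measurable: "\<And>q. q < m \<Longrightarrow> D q \<in> borel_measurable M"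
    and D_past: "\<And>j q. j < q \<Longrightarrow> q < m \<Longrightarrow> D j \<in> borel_measurable (F q)"
    and V_past: "\<And>j q. j \<le> q \<Longrightarrow> q < m \<Longrightarrow> V j \<in> borel_measurable (F q)"
    and V_bounded: "\<And>q \<omega>. q < m \<Longrightarrow> \<omega> \<in> space M \<Longrightarrow> \<bar>V q \<omega>\<bar> \<le> w"
    and cond_exp_D: "\<And>q. q < m \<Longrightarrow> AE \<omega> in M. real_cond_exp M (F q) (D q) \<omega> = 0"
    and a_measurable: "\<And>q. q < m \<Longrightarrow> a q \<in> borel_measurable (F q)"
    and b_measurable: "\<And>q. q < m \<Longrightarrow> b q \<in> borel_measurable (F q)"
    and D_between: "\<And>q \<omega>. q < m \<Longrightarrow> \<omega> \<in> space M \<Longrightarrow> a q \<omega> \<le> D q \<omega> \<and> D q \<omega> \<le> b q \<omega>"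
    and D_width: "\<And>q \<omega>. q < m \<Longrightarrow> \<omega> \<in> space M \<Longrightarrow> b q \<omega> - a q \<omega> \<le> c"
    and c_pos: "c > 0" and w_pos: "w > 0"
begin

lemma weighted_past_measurable:
  assumes "j < q" "q < m"
  shows "(\<lambda>\<omega>. V j \<omega> * D j \<omega>) \<in> borel_measurable (F q)"
proof -
  have [measurable]: "V j \<in> borel_measurable (F q)" "D j \<in> borel_measurable (F q)"
    using assms V_past[of j q] D_past[of j q] by auto
  show ?thesis by measurable
qed

lemma weighted_measurable:
  assumes "q < m"
  shows "(\<lambda>\<omega>. V q \<omega> * D q \<omega>) \<in> borel_measurable M"
proof -
  have [measurable]: "V q \<in> borel_measurable M" "D q \<in> borel_measurable M"
    using assms D_measurable measurable_from_subalg[OF subalgebra_F V_past] by auto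
  show ?thesis by measurable
qed

lemma AE_abs_weighted_le:
  assumes "q < m"
  shows "AE \<omega> in M. \<bar>V q \<omega> * D q \<omega>\<bar> \<le> w * c"
proof -
  interpret sigma_finite_subalgebra M "F q"
    using assms by (intro sigma_finite_subalgebra_if_subalgebra subalgebra_F)
  have "AE \<omega> in M. max (- c) (min 0 (a q \<omega>)) \<le> D q \<omega> \<and> D q \<omega> \<le> max (- c) (min 0 (a q \<omega>)) + c"
    using assms by (intro cond_exp_zero_shifted_interval[where b = "b q"] D_measurable a_measurable
        b_measurable D_between D_width cond_exp_D)
  then show ?thesis
  proof (rule AE_mp, intro AE_I2 impI)
    fix \<omega> assume "\<omega> \<in> space M" "max (- c) (min 0 (a q \<omega>)) \<le> D q \<omega> \<and> D q \<omega> \<le> max (- c) (min 0 (a q \<omega>)) + c"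
    then have "\<bar>D q \<omega>\<bar> \<le> c"
      using c_pos by (auto simp: abs_le_iff)
    then show "\<bar>V q \<omega> * D q \<omega>\<bar> \<le> w * c"
      unfolding abs_mult using V_bounded[OF assms \<open>\<omega> \<in> space M\<close>] by (intro mult_mono) auto
  qed
qed

lemma stopped_weighted_subgaussian_steps:
  "subgaussian_steps M (c * w) m (stopped_incr t (\<lambda>q \<omega>. V q \<omega> * D q \<omega>))"
  unfolding subgaussian_steps_def
proof (intro allI impI)
  fix i l assume "i < m"
  define X where "X q \<omega> = V q \<omega> * D q \<omega>" for q \<omega>
  define Z where "Z = stopped_incr t X"
  define Y where "Y \<omega> = exp (l * (\<Sum>j<i. Z j \<omega>))" for \<omega>
  define g where "g \<omega> = l * (if inside_until t X i \<omega> then V i \<omega> else 0)" for \<omega>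
  have [measurable]: "Measurable.pred (F i) (inside_until t X i)"
    unfolding X_def using weighted_past_measurable \<open>i < m\<close> by (intro pred_inside_until)
  have "(\<lambda>\<omega>. \<Sum>j<i. Z j \<omega>) \<in> borel_measurable (F i)"
    unfolding Z_def X_def using weighted_past_measurable \<open>i < m\<close>
    by (intro borel_measurable_sum measurable_stopped_incr) auto
  then have "Y \<in> borel_measurable (F i)"
    unfolding Y_def by measurable
  moreover have "g \<in> borel_measurable (F i)"
    unfolding g_def using V_past[of i i] \<open>i < m\<close> by measurable
  moreover have "AE \<omega> in M. Y \<omega> \<le> exp (\<bar>l\<bar> * (real i * (w * c)))"
    unfolding Y_def Z_def X_def using AE_abs_weighted_le \<open>i < m\<close>
    by (intro AE_exp_sum_le AE_abs_stopped_incr_le) auto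
  moreover have "0 \<le> Y \<omega>" for \<omega>
    by (simp add: Y_def)
  moreover have "\<bar>g \<omega>\<bar> \<le> \<bar>l\<bar> * w" if "\<omega> \<in> space M" for \<omega>
    unfolding g_def abs_mult using V_bounded[OF \<open>i < m\<close> that] w_pos by (auto intro: mult_left_mono)
  ultimately have "(\<integral>\<omega>. Y \<omega> * exp (g \<omega> * D i \<omega>) \<partial>M) \<le> exp ((\<bar>l\<bar> * w)\<^sup>2 * c\<^sup>2 / 8) * (\<integral>\<omega>. Y \<omega> \<partial>M)"
    using \<open>i < m\<close> c_pos
    by (intro cond_hoeffding_mgf[OF subalgebra_F D_measurable cond_exp_D a_measurable b_measurable
          D_between D_width]) auto
  moreover have "g \<omega> * D i \<omega> = l * Z i \<omega>" for \<omega>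
    by (simp add: g_def Z_def stopped_incr_def X_def)
  ultimately show "(\<integral>\<omega>. exp (l * (\<Sum>j<i. Z j \<omega>)) * exp (l * Z i \<omega>) \<partial>M)
      \<le> exp (l\<^sup>2 * (c * w)\<^sup>2 / 8) * (\<integral>\<omega>. exp (l * (\<Sum>j<i. Z j \<omega>)) \<partial>M)"
    by (simp add: Y_def power_mult_distrib mult_ac)
qed

theorem maximal_tail_le:
  assumes "m > 0" "t > 0"
  shows "measure M {\<omega> \<in> space M. \<exists>k\<le>m. \<bar>\<Sum>q<k. V q \<omega> * D q \<omega>\<bar> > t}
           \<le> 2 * exp (- 2 * t\<^sup>2 / (real m * (c * w)\<^sup>2))"
  using assms c_pos w_pos weighted_measurable AE_abs_weighted_le
  by (intro stopped_maximal_tail_le[OF stopped_weighted_subgaussian_steps, where K = "w * c"]) auto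

end

section \<open>Expansion of the rounding error\<close>

definition truncate :: "real \<Rightarrow> real \<Rightarrow> real" where
  "truncate w v = (if \<bar>v\<bar> \<le> w then v else 0)"

lemma abs_truncate_le: "w \<ge> 0 \<Longrightarrow> \<bar>truncate w v\<bar> \<le> w"
  by (simp add: truncate_def)

lemma truncate_eq: "\<bar>v\<bar> \<le> w \<Longrightarrow> truncate w v = v"
  by (simp add: truncate_def)

lemma truncate_zero [simp]: "truncate 0 v = 0"
  by (simp add: truncate_def)

lemma measurable_truncate [measurable]: "truncate w \<in> borel_measurable borel"
  unfolding truncate_def by measurable

text \<open>err_term j X D m is the part of the error of recursive summation that is of degree j in
  the rounding errors D, taken at step m + 1 for j = 0 (the exact partial sum) and at step m
  for j > 0; the shift makes the recursion in j uniform.\<close>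
fun err_term :: "nat \<Rightarrow> (nat \<Rightarrow> real) \<Rightarrow> (nat \<Rightarrow> real) \<Rightarrow> nat \<Rightarrow> real" where
  "err_term 0 X D m = (\<Sum>p=1..Suc m. X p)"
| "err_term (Suc j) X D m = (\<Sum>q<m-1. err_term j X D (Suc q) * D (Suc (Suc q)))"

lemma rec_sum_error_eq_sum:
  "rec_sum X D (Suc k) - (\<Sum>p=1..Suc k. X p)
     = (\<Sum>q<k. (err_term 0 X D (Suc q) + (rec_sum X D (Suc q) - (\<Sum>p=1..Suc q. X p))) * D (Suc (Suc q)))"
  by (induction k) (simp_all add: algebra_simps)

lemma err_term_eq_0: "m \<le> Suc j \<Longrightarrow> err_term (Suc j) X D m = 0"
proof (induction j arbitrary: m)
  case (Suc j)
  have "err_term (Suc j) X D (Suc q) = 0" if "q < m - 1" for q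
    using Suc.IH[of "Suc q"] Suc.prems that by simp
  then show ?case by simp
qed simp

lemma rec_sum_error_eq_sum_err_term:
  "k \<le> N \<Longrightarrow> rec_sum X D (Suc k) - (\<Sum>p=1..Suc k. X p) = (\<Sum>j<N. err_term (Suc j) X D (Suc k))"
proof (induction k arbitrary: N rule: less_induct)
  case (less k)
  have "rec_sum X D (Suc k) - (\<Sum>p=1..Suc k. X p)
      = (\<Sum>q<k. err_term 0 X D (Suc q) * D (Suc (Suc q)))
        + (\<Sum>q<k. (rec_sum X D (Suc q) - (\<Sum>p=1..Suc q. X p)) * D (Suc (Suc q)))"
    by (subst rec_sum_error_eq_sum) (simp only: distrib_right sum.distrib)
  also have "(\<Sum>q<k. (rec_sum X D (Suc q) - (\<Sum>p=1..Suc q. X p)) * D (Suc (Suc q)))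
      = (\<Sum>q<k. (\<Sum>j<N. err_term (Suc j) X D (Suc q)) * D (Suc (Suc q)))"
    using less by (intro sum.cong refl) auto
  also have "\<dots> = (\<Sum>j<N. \<Sum>q<k. err_term (Suc j) X D (Suc q) * D (Suc (Suc q)))"
    by (simp only: sum_distrib_right sum.swap[of _ "{..<k}"])
  also have "\<dots> = (\<Sum>j<N. err_term (Suc (Suc j)) X D (Suc k))"
    by simp
  also have "(\<Sum>q<k. err_term 0 X D (Suc q) * D (Suc (Suc q))) = err_term (Suc 0) X D (Suc k)"
    by simp
  also have "err_term (Suc 0) X D (Suc k) + (\<Sum>j<N. err_term (Suc (Suc j)) X D (Suc k))
      = (\<Sum>j<Suc N. err_term (Suc j) X D (Suc k))"
    by (simp only: sum.lessThan_Suc_shift)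
  also have "\<dots> = (\<Sum>j<N. err_term (Suc j) X D (Suc k))"
    using err_term_eq_0[of "Suc k" N] less.prems by (simp del: err_term.simps)
  finally show ?case .
qed

text \<open>If the truncated weighted sums of order j stay below W (Suc j), then the truncation never
  acts and by induction on j every err_term of order j is bounded by W j.\<close>
lemma rec_sum_error_le:
  fixes X D W :: "nat \<Rightarrow> real"
  assumes "n \<ge> 2"
    and first: "\<And>m. 1 \<le> m \<Longrightarrow> m \<le> n - 1 \<Longrightarrow> \<bar>err_term 0 X D m\<bar> \<le> W 0"
    and step: "\<And>j k. j < n - 1 \<Longrightarrow> k \<le> n - 1 \<Longrightarrow>
      \<bar>\<Sum>q<k. truncate (W j) (err_term j X D (Suc q)) * D (Suc (Suc q))\<bar> \<le> W (Suc j)"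
  shows "\<bar>rec_sum X D n - (\<Sum>p=1..n. X p)\<bar> \<le> (\<Sum>j<n-1. W (Suc j))"
proof -
  have untruncated: "err_term (Suc j) X D k
      = (\<Sum>q<k-1. truncate (W j) (err_term j X D (Suc q)) * D (Suc (Suc q)))"
    if "\<And>q. q < k - 1 \<Longrightarrow> \<bar>err_term j X D (Suc q)\<bar> \<le> W j" for j k
    using that by (auto simp: truncate_eq intro!: sum.cong)
  have bound: "\<bar>err_term j X D m\<bar> \<le> W j" if "j \<le> n - 1" "1 \<le> m" "m \<le> n - 1" for j m
    using that
  proof (induction j arbitrary: m)
    case (Suc j)
    then have "err_term (Suc j) X D m
        = (\<Sum>q<m-1. truncate (W j) (err_term j X D (Suc q)) * D (Suc (Suc q)))"
      by (intro untruncated) auto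
    then show ?case
      using step[of j "m - 1"] Suc.prems by simp
  qed (use first in auto)
  have each: "\<bar>err_term (Suc j) X D n\<bar> \<le> W (Suc j)" if "j < n - 1" for j
  proof -
    have "err_term (Suc j) X D n
        = (\<Sum>q<n-1. truncate (W j) (err_term j X D (Suc q)) * D (Suc (Suc q)))"
      using that by (intro untruncated bound) auto
    then show ?thesis
      using step[of j "n - 1"] that by simp
  qed
  have "rec_sum X D n - (\<Sum>p=1..n. X p) = (\<Sum>j<n-1. err_term (Suc j) X D n)"
    using rec_sum_error_eq_sum_err_term[of "n - 1" "n - 1" X D] \<open>n \<ge> 2\<close> by simp
  also have "\<bar>\<dots>\<bar> \<le> (\<Sum>j<n-1. W (Suc j))"
    using each by (auto intro!: order_trans[OF sum_abs] sum_mono simp del: err_term.simps)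
  finally show ?thesis .
qed

section \<open>Recursive summation with random rounding errors\<close>

lemma sets_exists_partial_sum_exceeds:
  fixes X :: "nat \<Rightarrow> 'a \<Rightarrow> real"
  assumes "\<And>q. q < m \<Longrightarrow> X q \<in> borel_measurable M"
  shows "{\<omega> \<in> space M. \<exists>k\<le>m. \<bar>\<Sum>q<k. X q \<omega>\<bar> > t} \<in> sets M"
proof -
  have "Measurable.pred M (\<lambda>\<omega>. \<bar>\<Sum>q<k. X q \<omega>\<bar> > t)" if "k \<le> m" for k
  proof -
    have [measurable]: "(\<lambda>\<omega>. \<Sum>q<k. X q \<omega>) \<in> borel_measurable M"
      by (rule borel_measurable_sum) (use assms that in auto)
    show ?thesis by measurable
  qed
  then have "Measurable.pred M (\<lambda>\<omega>. \<exists>k\<in>{..m}. \<bar>\<Sum>q<k. X q \<omega>\<bar> > t)"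
    by (intro pred_intros_finite) auto
  then show ?thesis
    by (simp only: pred_def Bex_def atMost_iff)
qed

lemma (in prob_space) prob_ge_of_bad_events:
  assumes "T \<in> events" "\<And>i. i < N \<Longrightarrow> B i \<in> events" "\<And>i. i < N \<Longrightarrow> prob (B i) \<le> e"
    and "space M - (\<Union>i<N. B i) \<subseteq> T"
  shows "1 - real N * e \<le> prob T"
proof -
  have "prob (\<Union>i<N. B i) \<le> (\<Sum>i<N. prob (B i))"
    using assms(2) by (intro finite_measure_subadditive_finite) auto
  also have "\<dots> \<le> real N * e"
    using assms(3) sum_mono[of "{..<N}" "\<lambda>i. prob (B i)" "\<lambda>_. e"] by simp
  finally have "1 - real N * e \<le> prob (space M - (\<Union>i<N. B i))"
    using assms(2) by (subst prob_compl) auto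
  also have "\<dots> \<le> prob T"
    using assms(1,4) by (intro finite_measure_mono) auto
  finally show ?thesis .
qed

lemma two_exp_neg_half_sq:
  assumes "n > 0" "0 < \<delta>" "\<delta> < 1"
  shows "2 * exp (- (sqrt (2 * ln (2 * real n / \<delta>)))\<^sup>2 / 2) = \<delta> / real n"
proof -
  have "2 * real n / \<delta> > 1"
    using assms by (simp add: field_simps)
  then show ?thesis
    using assms by (simp add: exp_minus field_simps)
qed

lemma geometric_bound_eq:
  fixes lam u \<mu> C :: real and n :: nat
  defines "\<kappa> \<equiv> lam * sqrt (real n) * u"
  shows "(\<Sum>j<N. \<kappa> ^ j) * (lam * \<bar>\<mu>\<bar> * real n powr (3/2) + lam\<^sup>2 * C * real n) * u
     = (\<Sum>j<N. \<kappa> ^ Suc j * (real n * \<bar>\<mu>\<bar> + lam * C * sqrt (real n)))"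
proof -
  have "real n powr (3/2) = real n powr (1 + 1/2)"
    by simp
  also have "\<dots> = real n * sqrt (real n)"
    unfolding powr_add by (cases "n = 0") (simp_all add: powr_half_sqrt)
  finally have "(lam * \<bar>\<mu>\<bar> * real n powr (3/2) + lam\<^sup>2 * C * real n) * u
      = \<kappa> * (real n * \<bar>\<mu>\<bar> + lam * C * sqrt (real n))"
    by (simp add: \<kappa>_def algebra_simps power2_eq_square)
  then have "(\<Sum>j<N. \<kappa> ^ j) * (lam * \<bar>\<mu>\<bar> * real n powr (3/2) + lam\<^sup>2 * C * real n) * u
      = (\<Sum>j<N. \<kappa> ^ j) * (\<kappa> * (real n * \<bar>\<mu>\<bar> + lam * C * sqrt (real n)))"
    by (simp only: mult.assoc)
  also have "\<dots> = (\<Sum>j<N. \<kappa> ^ Suc j * (real n * \<bar>\<mu>\<bar> + lam * C * sqrt (real n)))"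
    by (simp only: sum_distrib_right) (simp add: mult_ac)
  finally show ?thesis .
qed

lemma info_alg:
  fixes M :: "'a measure" and x d :: "nat \<Rightarrow> 'a \<Rightarrow> real"
  assumes "\<And>i. i \<in> {1..n} \<Longrightarrow> x i \<in> borel_measurable M"
    and "\<And>j. j \<in> {2..<k} \<Longrightarrow> d j \<in> borel_measurable M"
  shows subalgebra_info_alg: "subalgebra M (info_alg M x d n k)"
    and measurable_x_info_alg: "\<And>i. i \<in> {1..n} \<Longrightarrow> x i \<in> borel_measurable (info_alg M x d n k)"
    and measurable_d_info_alg: "\<And>j. j \<in> {2..<k} \<Longrightarrow> d j \<in> borel_measurable (info_alg M x d n k)"
proof -
  define G where "G = {d i -` B \<inter> space M | i B. i \<in> {2..<k} \<and> B \<in> sets borel} \<union>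
      {x i -` B \<inter> space M | i B. i \<in> {1..n} \<and> B \<in> sets borel}"
  have "G \<subseteq> Pow (space M)" "G \<subseteq> sets M"
    unfolding G_def using assms by (auto intro!: measurable_sets)
  then have space: "space (info_alg M x d n k) = space M"
    and sets: "sets (info_alg M x d n k) = sigma_sets (space M) G"
    unfolding info_alg_def G_def[symmetric] by simp_all
  show "subalgebra M (info_alg M x d n k)"
    unfolding subalgebra_def sets using space \<open>G \<subseteq> sets M\<close> by (simp add: sets.sigma_sets_subset)
  show "x i \<in> borel_measurable (info_alg M x d n k)" if "i \<in> {1..n}" for i
  proof (rule measurableI)
    fix B :: "real set" assume "B \<in> sets borel"
    then have "x i -` B \<inter> space M \<in> G"
      unfolding G_def using that by blast
    then show "x i -` B \<inter> space (info_alg M x d n k) \<in> sets (info_alg M x d n k)"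
      unfolding space sets by (rule sigma_sets.Basic)
  qed (simp add: space)
  show "d j \<in> borel_measurable (info_alg M x d n k)" if "j \<in> {2..<k}" for j
  proof (rule measurableI)
    fix B :: "real set" assume "B \<in> sets borel"
    then have "d j -` B \<inter> space M \<in> G"
      unfolding G_def using that by blast
    then show "d j -` B \<inter> space (info_alg M x d n k) \<in> sets (info_alg M x d n k)"
      unfolding space sets by (rule sigma_sets.Basic)
  qed (simp add: space)
qed

locale rounding_model = prob_space M for M :: "'a measure" +
  fixes x d a b :: "nat \<Rightarrow> 'a \<Rightarrow> real" and n :: nat and \<mu> C u :: real
  assumes n_ge_2: "n \<ge> 2"
    and indep: "indep_vars (\<lambda>_. borel) x {1..n}"
    and mean: "\<And>i. i \<in> {1..n} \<Longrightarrow> expectation (x i) = \<mu>"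
    and x_bounded: "\<And>i \<omega>. i \<in> {1..n} \<Longrightarrow> \<omega> \<in> space M \<Longrightarrow> \<bar>x i \<omega> - \<mu>\<bar> \<le> C"
    and d_measurable: "\<And>k. k \<in> {2..n} \<Longrightarrow> d k \<in> borel_measurable M"
    and cond_exp_d: "\<And>k. k \<in> {2..n} \<Longrightarrow> AE \<omega> in M. real_cond_exp M (info_alg M x d n k) (d k) \<omega> = 0"
    and a_measurable: "\<And>k. k \<in> {2..n} \<Longrightarrow> a k \<in> borel_measurable (info_alg M x d n k)"
    and b_measurable: "\<And>k. k \<in> {2..n} \<Longrightarrow> b k \<in> borel_measurable (info_alg M x d n k)"
    and d_between: "\<And>k \<omega>. k \<in> {2..n} \<Longrightarrow> \<omega> \<in> space M \<Longrightarrow> a k \<omega> \<le> d k \<omega> \<and> d k \<omega> \<le> b k \<omega>"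
    and d_width: "\<And>k \<omega>. k \<in> {2..n} \<Longrightarrow> \<omega> \<in> space M \<Longrightarrow> b k \<omega> - a k \<omega> \<le> 2 * u"
    and u_pos: "u > 0"
begin

lemma x_measurable: "i \<in> {1..n} \<Longrightarrow> x i \<in> borel_measurable M"
  using indep by (auto simp: indep_vars_def)

lemma C_nonneg: "C \<ge> 0"
proof -
  obtain \<omega> where "\<omega> \<in> space M"
    using not_empty by blast
  then show ?thesis
    using order_trans[OF abs_ge_zero x_bounded[of 1 \<omega>]] n_ge_2 by simp
qed

lemma info_alg_facts:
  assumes "k \<le> Suc n"
  shows "subalgebra M (info_alg M x d n k)"
    and "\<And>i. i \<in> {1..n} \<Longrightarrow> x i \<in> borel_measurable (info_alg M x d n k)"
    and "\<And>j. j \<in> {2..<k} \<Longrightarrow> d j \<in> borel_measurable (info_alg M x d n k)"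
  using assms x_measurable d_measurable
  by (auto intro!: subalgebra_info_alg measurable_x_info_alg measurable_d_info_alg)

lemma err_term_measurable:
  assumes "k \<in> {2..n}" "1 \<le> m" "m < k"
  shows "(\<lambda>\<omega>. err_term j (\<lambda>i. x i \<omega>) (\<lambda>i. d i \<omega>) m) \<in> borel_measurable (info_alg M x d n k)"
  using assms(2,3)
proof (induction j arbitrary: m)
  case 0
  then show ?case
    using assms(1) info_alg_facts(2)[of k] by (auto intro!: borel_measurable_sum)
next
  case (Suc j)
  show ?case
    unfolding err_term.simps
  proof (intro borel_measurable_sum borel_measurable_times)
    fix q assume "q \<in> {..<m - 1}"
    then show "(\<lambda>\<omega>. err_term j (\<lambda>i. x i \<omega>) (\<lambda>i. d i \<omega>) (Suc q)) \<in> borel_measurable (info_alg M x d n k)"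
      and "(\<lambda>\<omega>. d (Suc (Suc q)) \<omega>) \<in> borel_measurable (info_alg M x d n k)"
      using Suc assms(1) info_alg_facts(3)[of k "Suc (Suc q)"] by auto
  qed
qed

lemma rec_sum_measurable:
  "k < n \<Longrightarrow> (\<lambda>\<omega>. rec_sum (\<lambda>i. x i \<omega>) (\<lambda>i. d i \<omega>) (Suc k)) \<in> borel_measurable M"
proof (induction k)
  case (Suc k)
  then have [measurable]: "x (Suc (Suc k)) \<in> borel_measurable M" "d (Suc (Suc k)) \<in> borel_measurable M"
      "(\<lambda>\<omega>. rec_sum (\<lambda>i. x i \<omega>) (\<lambda>i. d i \<omega>) (Suc k)) \<in> borel_measurable M"
    using x_measurable d_measurable by auto
  show ?case by simp
qed (use x_measurable in auto)

definition centred_dev :: "real \<Rightarrow> 'a set" where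
  "centred_dev t = {\<omega> \<in> space M. \<exists>k\<le>n. \<bar>\<Sum>q<k. x (Suc q) \<omega> - \<mu>\<bar> > t}"

definition err_dev :: "nat \<Rightarrow> real \<Rightarrow> real \<Rightarrow> 'a set" where
  "err_dev j w t = {\<omega> \<in> space M. \<exists>k\<le>n-1.
     \<bar>\<Sum>q<k. truncate w (err_term j (\<lambda>i. x i \<omega>) (\<lambda>i. d i \<omega>) (Suc q)) * d (Suc (Suc q)) \<omega>\<bar> > t}"

lemma prob_centred_dev:
  assumes "lam > 0"
  shows "measure M (centred_dev (lam * C * sqrt (real n))) \<le> 2 * exp (- lam\<^sup>2 / 2)"
proof (cases "C = 0")
  case True
  then have "(\<Sum>q<k. x (Suc q) \<omega> - \<mu>) = 0" if "\<omega> \<in> space M" "k \<le> n" for \<omega> k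
    using x_bounded[OF _ that(1)] that(2) by (intro sum.neutral) fastforce
  then have empty: "{\<omega> \<in> space M. \<exists>k\<le>n. \<bar>\<Sum>q<k. x (Suc q) \<omega> - \<mu>\<bar> > lam * C * sqrt (real n)} = {}"
    using True by auto
  show ?thesis
    unfolding centred_dev_def empty by simp
next
  case False
  then have "C > 0"
    using C_nonneg by simp
  then have "measure M {\<omega> \<in> space M. \<exists>k\<le>n. \<bar>\<Sum>q<k. x (Suc q) \<omega> - \<mu>\<bar> > lam * C * sqrt (real n)}
      \<le> 2 * exp (- 2 * (lam * C * sqrt (real n))\<^sup>2 / (real n * (2 * C)\<^sup>2))"
    using n_ge_2 assms by (intro hoeffding_maximal_indep indep mean x_bounded) auto
  also have "- 2 * (lam * C * sqrt (real n))\<^sup>2 / (real n * (2 * C)\<^sup>2) = - lam\<^sup>2 / 2"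
    using \<open>C > 0\<close> n_ge_2 by (simp add: power_mult_distrib field_simps)
  finally show ?thesis unfolding centred_dev_def .
qed

lemma weighted_martingale_differences_err_term:
  assumes "w > 0"
  shows "weighted_martingale_differences M (\<lambda>q. info_alg M x d n (Suc (Suc q)))
    (\<lambda>q \<omega>. truncate w (err_term j (\<lambda>i. x i \<omega>) (\<lambda>i. d i \<omega>) (Suc q))) (\<lambda>q. d (Suc (Suc q)))
    (\<lambda>q. a (Suc (Suc q))) (\<lambda>q. b (Suc (Suc q))) (n - 1) (2 * u) w"
proof (intro weighted_martingale_differences.intro weighted_martingale_differences_axioms.intro
    prob_space_axioms)
  fix q assume "q < n - 1"
  then have q: "Suc (Suc q) \<in> {2..n}"
    by auto
  show "subalgebra M (info_alg M x d n (Suc (Suc q)))"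
    using q by (intro info_alg_facts) auto
  show "(\<lambda>\<omega>. truncate w (err_term j (\<lambda>i. x i \<omega>) (\<lambda>i. d i \<omega>) (Suc p)))
      \<in> borel_measurable (info_alg M x d n (Suc (Suc q)))" if "p \<le> q" for p
    using that q by (intro measurable_compose[OF err_term_measurable measurable_truncate]) auto
  show "d (Suc (Suc p)) \<in> borel_measurable (info_alg M x d n (Suc (Suc q)))" if "p < q" for p
    using that q by (intro info_alg_facts) auto
qed (use assms u_pos in \<open>auto intro!: abs_truncate_le d_measurable cond_exp_d a_measurable
    b_measurable d_between d_width\<close>)

lemma prob_err_dev:
  assumes "lam > 0" "w \<ge> 0"
  shows "measure M (err_dev j w (lam * sqrt (real n) * u * w)) \<le> 2 * exp (- lam\<^sup>2 / 2)"
proof (cases "w = 0")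
  case False
  define t where "t = lam * sqrt (real n) * u * w"
  have "w > 0" "t > 0"
    using False assms u_pos n_ge_2 by (auto simp: t_def)
  have "measure M {\<omega> \<in> space M. \<exists>k\<le>n-1.
      \<bar>\<Sum>q<k. truncate w (err_term j (\<lambda>i. x i \<omega>) (\<lambda>i. d i \<omega>) (Suc q)) * d (Suc (Suc q)) \<omega>\<bar> > t}
      \<le> 2 * exp (- 2 * t\<^sup>2 / (real (n - 1) * (2 * u * w)\<^sup>2))"
    using weighted_martingale_differences.maximal_tail_le[OF weighted_martingale_differences_err_term[OF \<open>w > 0\<close>],
        where t = t] \<open>t > 0\<close> n_ge_2
    by simp
  also have "- 2 * t\<^sup>2 / (real (n - 1) * (2 * u * w)\<^sup>2) \<le> - lam\<^sup>2 / 2"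
  proof -
    have "- 2 * t\<^sup>2 / (real (n - 1) * (2 * u * w)\<^sup>2) = - lam\<^sup>2 / 2 * (real n / (real n - 1))"
      using n_ge_2 u_pos \<open>w > 0\<close> by (simp add: t_def of_nat_diff power_mult_distrib field_simps)
    also have "\<dots> \<le> - lam\<^sup>2 / 2"
    proof -
      have "1 \<le> real n / (real n - 1)"
        using n_ge_2 by (simp add: field_simps)
      from mult_left_mono_neg[OF this, of "- lam\<^sup>2 / 2"] show ?thesis
        by simp
    qed
    finally show ?thesis .
  qed
  finally show ?thesis
    unfolding err_dev_def by (simp add: t_def)
next
  case True
  then have empty: "{\<omega> \<in> space M. \<exists>k\<le>n-1.
      \<bar>\<Sum>q<k. truncate w (err_term j (\<lambda>i. x i \<omega>) (\<lambda>i. d i \<omega>) (Suc q)) * d (Suc (Suc q)) \<omega>\<bar>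
        > lam * sqrt (real n) * u * w} = {}"
    by simp
  show ?thesis
    unfolding err_dev_def empty by simp
qed

end

context rounding_model
begin

lemma sets_centred_dev: "centred_dev t \<in> sets M"
proof -
  have "(\<lambda>\<omega>. x (Suc q) \<omega> - \<mu>) \<in> borel_measurable M" if "q < n" for q
    using x_measurable[of "Suc q"] that by simp
  then show ?thesis
    unfolding centred_dev_def by (rule sets_exists_partial_sum_exceeds)
qed

lemma sets_err_dev: "err_dev j w t \<in> sets M"
proof -
  have "(\<lambda>\<omega>. truncate w (err_term j (\<lambda>i. x i \<omega>) (\<lambda>i. d i \<omega>) (Suc q)) * d (Suc (Suc q)) \<omega>)
      \<in> borel_measurable M" if "q < n - 1" for q
  proof -
    have k: "Suc (Suc q) \<in> {2..n}"
      using that by auto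
    have [measurable]: "(\<lambda>\<omega>. err_term j (\<lambda>i. x i \<omega>) (\<lambda>i. d i \<omega>) (Suc q)) \<in> borel_measurable M"
      using measurable_from_subalg[OF info_alg_facts(1)
          err_term_measurable[where m = "Suc q" and k = "Suc (Suc q)" and j = j]] k by auto
    have [measurable]: "d (Suc (Suc q)) \<in> borel_measurable M"
      using k by (rule d_measurable)
    show ?thesis by measurable
  qed
  then show ?thesis
    unfolding err_dev_def by (rule sets_exists_partial_sum_exceeds)
qed

lemma sets_rec_sum_error_le:
  "{\<omega> \<in> space M. \<bar>rec_sum (\<lambda>i. x i \<omega>) (\<lambda>i. d i \<omega>) n - (\<Sum>i=1..n. x i \<omega>)\<bar> \<le> r} \<in> sets M"
proof -
  have [measurable]: "(\<lambda>\<omega>. rec_sum (\<lambda>i. x i \<omega>) (\<lambda>i. d i \<omega>) n) \<in> borel_measurable M"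
    using rec_sum_measurable[of "n - 1"] n_ge_2 by simp
  have [measurable]: "(\<lambda>\<omega>. \<Sum>i=1..n. x i \<omega>) \<in> borel_measurable M"
    using x_measurable by (intro borel_measurable_sum) auto
  show ?thesis by measurable
qed

lemma rec_sum_error_le_outside_dev:
  fixes W :: "nat \<Rightarrow> real"
  assumes "\<omega> \<in> space M" "\<omega> \<notin> centred_dev t" "W 0 = real n * \<bar>\<mu>\<bar> + t"
    and "\<And>j. j < n - 1 \<Longrightarrow> \<omega> \<notin> err_dev j (W j) (W (Suc j))"
  shows "\<bar>rec_sum (\<lambda>i. x i \<omega>) (\<lambda>i. d i \<omega>) n - (\<Sum>i=1..n. x i \<omega>)\<bar> \<le> (\<Sum>j<n-1. W (Suc j))"
proof (rule rec_sum_error_le[OF n_ge_2])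
  fix m assume m: "1 \<le> m" "m \<le> n - 1"
  have "err_term 0 (\<lambda>i. x i \<omega>) (\<lambda>i. d i \<omega>) m = (\<Sum>q<Suc m. x (Suc q) \<omega> - \<mu>) + real (Suc m) * \<mu>"
    using sum.atLeast1_atMost_eq[of "\<lambda>p. x p \<omega>" "Suc m"] by (simp add: sum_subtractf)
  moreover have "\<bar>\<Sum>q<Suc m. x (Suc q) \<omega> - \<mu>\<bar> \<le> t"
  proof -
    have "\<forall>k\<le>n. \<bar>\<Sum>q<k. x (Suc q) \<omega> - \<mu>\<bar> \<le> t"
      using assms(1,2) by (auto simp: centred_dev_def not_less)
    moreover have "Suc m \<le> n"
      using m n_ge_2 by simp
    ultimately show ?thesis
      by blast
  qed
  moreover have "\<bar>real (Suc m) * \<mu>\<bar> \<le> real n * \<bar>\<mu>\<bar>"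
    using m n_ge_2 by (simp add: abs_mult mult_right_mono)
  ultimately show "\<bar>err_term 0 (\<lambda>i. x i \<omega>) (\<lambda>i. d i \<omega>) m\<bar> \<le> W 0"
    using assms(3) by (simp del: err_term.simps)
next
  fix j k assume "j < n - 1" "k \<le> n - 1"
  then show "\<bar>\<Sum>q<k. truncate (W j) (err_term j (\<lambda>i. x i \<omega>) (\<lambda>i. d i \<omega>) (Suc q)) * d (Suc (Suc q)) \<omega>\<bar>
      \<le> W (Suc j)"
    using assms(1,4) by (auto simp: err_dev_def not_less)
qed

theorem rec_sum_error_le_with_high_prob:
  assumes "0 < \<delta>" "\<delta> < 1"
  defines "lam \<equiv> sqrt (2 * ln (2 * real n / \<delta>))"
  defines "\<kappa> \<equiv> lam * sqrt (real n) * u" and "S \<equiv> real n * \<bar>\<mu>\<bar> + lam * C * sqrt (real n)"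
  shows "1 - \<delta> \<le> prob {\<omega> \<in> space M.
      \<bar>rec_sum (\<lambda>i. x i \<omega>) (\<lambda>i. d i \<omega>) n - (\<Sum>i=1..n. x i \<omega>)\<bar> \<le> (\<Sum>j<n-1. \<kappa> ^ Suc j * S)}"
    (is "_ \<le> prob ?T")
proof -
  define W where "W j = \<kappa> ^ j * S" for j
  define bad where "bad = case_nat (centred_dev (lam * C * sqrt (real n))) (\<lambda>j. err_dev j (W j) (W (Suc j)))"
  have "1 < 2 * real n / \<delta>"
    using n_ge_2 assms(1,2) by (simp add: field_simps)
  then have "lam > 0"
    by (simp add: lam_def)
  then have W: "W j \<ge> 0" "W (Suc j) = lam * sqrt (real n) * u * W j" for j
    using C_nonneg u_pos by (simp_all add: W_def \<kappa>_def S_def)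
  have tail: "2 * exp (- lam\<^sup>2 / 2) = \<delta> / real n"
    unfolding lam_def using n_ge_2 assms(1,2) by (intro two_exp_neg_half_sq) auto
  have "bad i \<in> events" "prob (bad i) \<le> \<delta> / real n" for i
    using prob_centred_dev[OF \<open>lam > 0\<close>] prob_err_dev[OF \<open>lam > 0\<close> W(1)] tail
    by (cases i; simp add: bad_def W(2) sets_centred_dev sets_err_dev)+
  moreover have "space M - (\<Union>i<n. bad i) \<subseteq> ?T"
  proof
    fix \<omega> assume \<omega>: "\<omega> \<in> space M - (\<Union>i<n. bad i)"
    then have good: "\<omega> \<notin> bad i" if "i < n" for i
      using that by auto
    have "\<omega> \<notin> centred_dev (lam * C * sqrt (real n))"
      using good[of 0] n_ge_2 by (simp add: bad_def)
    moreover have "\<omega> \<notin> err_dev j (W j) (W (Suc j))" if "j < n - 1" for j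
      using good[of "Suc j"] that by (simp add: bad_def)
    ultimately show "\<omega> \<in> ?T"
      using \<omega> rec_sum_error_le_outside_dev[of \<omega> "lam * C * sqrt (real n)" W] by (simp add: W_def S_def)
  qed
  ultimately have "1 - real n * (\<delta> / real n) \<le> prob ?T"
    by (intro prob_ge_of_bad_events sets_rec_sum_error_le)
  then show ?thesis
    using n_ge_2 by (simp add: W_def)
qed

end

theorem theorem5p1:
  fixes M :: "'a measure" and x d a b :: "nat \<Rightarrow> 'a \<Rightarrow> real"
    and n :: nat and \<mu>x Cx u \<delta> :: real
  assumes "prob_space M"
    and "n \<ge> 2"
    and "prob_space.indep_vars M (\<lambda>_. borel) x {1..n}"
    and "\<And>i. i \<in> {1..n} \<Longrightarrow> prob_space.expectation M (x i) = \<mu>x"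
    and "\<And>i \<omega>. i \<in> {1..n} \<Longrightarrow> \<omega> \<in> space M \<Longrightarrow> \<bar>x i \<omega> - \<mu>x\<bar> \<le> Cx"
    and "\<And>k. k \<in> {2..n} \<Longrightarrow> d k \<in> borel_measurable M"
    and "\<And>k. k \<in> {2..n} \<Longrightarrow> prob_space.expectation M (d k) = 0"
    and "\<And>k. k \<in> {2..n} \<Longrightarrow>
           AE \<omega> in M. real_cond_exp M (info_alg M x d n k) (d k) \<omega> = 0"
    and "\<And>k. k \<in> {2..n} \<Longrightarrow> a k \<in> borel_measurable (info_alg M x d n k)"
    and "\<And>k. k \<in> {2..n} \<Longrightarrow> b k \<in> borel_measurable (info_alg M x d n k)"
    and "\<And>k \<omega>. k \<in> {2..n} \<Longrightarrow> \<omega> \<in> space M \<Longrightarrow> a k \<omega> \<le> d k \<omega> \<and> d k \<omega> \<le> b k \<omega>"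
    and "\<And>k \<omega>. k \<in> {2..n} \<Longrightarrow> \<omega> \<in> space M \<Longrightarrow> b k \<omega> - a k \<omega> \<le> 2 * u"
    and "u > 0"
    and "0 < \<delta>" and "\<delta> < 1"
  shows "measure M {\<omega> \<in> space M.
           \<bar>rec_sum (\<lambda>i. x i \<omega>) (\<lambda>k. d k \<omega>) n - (\<Sum>i=1..n. x i \<omega>)\<bar>
             \<le> (let lam = sqrt (2 * ln (2 * real n / \<delta>)); kap = lam * sqrt (real n) * u
                in (\<Sum>j<n-1. kap ^ j) * (lam * \<bar>\<mu>x\<bar> * real n powr (3/2) + lam^2 * Cx * real n) * u)}
         \<ge> 1 - \<delta>"
proof -
  interpret rounding_model M x d a b n \<mu>x Cx u
    by (intro rounding_model.intro rounding_model_axioms.intro) (use assms in auto)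
  show ?thesis
    unfolding Let_def geometric_bound_eq by (rule rec_sum_error_le_with_high_prob[OF assms(14,15)])
qed

end
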